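(* Let $n\ge 1$ and consider $\mathbb{R}^{2n}$ with coordinates $(q_1,\dots,q_n,p_1,\dots,p_n)$. Let $J_2$ be the Poisson matrix $\begin{pmatrix}0&I_n\\-I_n&0\end{pmatrix}$ of the standard symplectic bracket, and let $J_3$ be the Poisson matrix of the bracket $\{q_i,q_j\}=e^{p_j}$ for $1\le j\le i-1\le n-1$; $\{q_i,p_i\}=-e^{p_i}+e^{q_i-q_{i-1}}$ for $i=1,\dots,n$; $\{q_i,p_j\}=e^{q_j-q_{j-1}}-e^{q_{j+1}-q_j}$ for $1\le j\le i-1$; $\{p_i,p_{i+1}\}=e^{q_{i+1}-q_i}$ for $i=1,\dots,n-1$; all other brackets of coordinates (not obtained by antisymmetry) being zero, terms with undefined indices ($q_0$, $q_{n+1}$) omitted. Define the recursion operator $\mathcal{R}=J_3J_2^{-1}$, the Poisson tensors $J_j=\mathcal{R}^{j-2}J_2$ for $j\ge 2$, the vector fields $X_i=\mathcal{R}^iX_0$ for $i\ge 0$ where $X_0=\sum_{i=1}^n i\,\frac{\partial}{\partial q_i}+\sum_{i=1}^n\frac{\partial}{\partial p_i}$, and $\chi_j=\mathcal{R}^{j-1}\chi_1$ for $j\ge1$ where $\chi_1=J_2\nabla h_1$ with $h_1=-\sum_{i=1}^n e^{p_i}+\sum_{i=1}^{n-1}e^{q_{i+1}-q_i}$. Let $h_j$ ($j\ge1$) denote Hamiltonian functions of the flows, $\chi_j=J_2\nabla h_j$. Then for all $i\ge 0$: $X_i(h_j)=(i+j)h_{i+j}$ for $j\ge 1$; $\mathcal{L}_{X_i}J_j=(j-i-2)J_{i+j}$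 for $j\ge 2$; $[X_i,X_j]=(j-i)X_{i+j}$ for $j\ge 0$. *)

theory Defs
  imports "HOL-Analysis.Analysis"
begin

text \<open>Points of R^(2n) are functions nat => real; coordinate q_i is x i and
  p_i is x (n+i), for i = 1..n.  Matrix/tensor/vector-field indices range over 1..2n.\<close>

type_synonym pt = "nat \<Rightarrow> real"
type_synonym vfield = "pt \<Rightarrow> nat \<Rightarrow> real"
type_synonym tensor = "pt \<Rightarrow> nat \<Rightarrow> nat \<Rightarrow> real"

definition pd :: "nat \<Rightarrow> (pt \<Rightarrow> real) \<Rightarrow> pt \<Rightarrow> real" where
  "pd c f x = deriv (\<lambda>t. f (x(c := t))) (x c)"

text \<open>e^(q_i - q_(i-1)), omitted (= 0) when an index is undefined.\<close>
definition eqd :: "nat \<Rightarrow> nat \<Rightarrow> pt \<Rightarrow> real" where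
  "eqd n i x = (if 2 \<le> i \<and> i \<le> n then exp (x i - x (i - 1)) else 0)"

text \<open>Listed brackets {x_a, x_b} of the cubic bracket (before antisymmetrisation).\<close>
definition J3_base :: "nat \<Rightarrow> pt \<Rightarrow> nat \<Rightarrow> nat \<Rightarrow> real" where
  "J3_base n x a b =
    (if 1 \<le> a \<and> a \<le> n \<and> 1 \<le> b \<and> b < a then exp (x (n + b))
     else if 1 \<le> a \<and> a \<le> n \<and> b = n + a then - exp (x (n + a)) + eqd n a x
     else if 1 \<le> a \<and> a \<le> n \<and> n + 1 \<le> b \<and> b < n + a
       then eqd n (b - n) x - eqd n (b - n + 1) x
     else if n + 1 \<le> a \<and> a < 2 * n \<and> b = a + 1 then eqd n (a - n + 1) x
     else 0)"

definition J3 :: "nat \<Rightarrow> tensor" where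
  "J3 n x a b = J3_base n x a b - J3_base n x b a"

definition J2 :: "nat \<Rightarrow> nat \<Rightarrow> nat \<Rightarrow> real" where
  "J2 n a b = (if 1 \<le> a \<and> a \<le> n \<and> b = a + n then 1
               else if 1 \<le> b \<and> b \<le> n \<and> a = b + n then -1 else 0)"

definition J2inv :: "nat \<Rightarrow> nat \<Rightarrow> nat \<Rightarrow> real" where
  "J2inv n a b = - J2 n a b"

definition mmul :: "nat \<Rightarrow> tensor \<Rightarrow> tensor \<Rightarrow> tensor" where
  "mmul n A B x a b = (\<Sum>c = 1..2 * n. A x a c * B x c b)"

definition mid :: "nat \<Rightarrow> tensor" where
  "mid n x a b = (if a = b \<and> 1 \<le> a \<and> a \<le> 2 * n then 1 else 0)"

fun mpow :: "nat \<Rightarrow> tensor \<Rightarrow> nat \<Rightarrow> tensor" where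
  "mpow n A 0 = mid n"
| "mpow n A (Suc k) = mmul n A (mpow n A k)"

definition Rop :: "nat \<Rightarrow> tensor" where
  "Rop n = mmul n (J3 n) (\<lambda>x. J2inv n)"

definition Jt :: "nat \<Rightarrow> nat \<Rightarrow> tensor" where
  "Jt n j = mmul n (mpow n (Rop n) (j - 2)) (\<lambda>x. J2 n)"

definition mvec :: "nat \<Rightarrow> tensor \<Rightarrow> vfield \<Rightarrow> vfield" where
  "mvec n A X x a = (\<Sum>b = 1..2 * n. A x a b * X x b)"

definition X0 :: "nat \<Rightarrow> vfield" where
  "X0 n x a = (if 1 \<le> a \<and> a \<le> n then real a
               else if n + 1 \<le> a \<and> a \<le> 2 * n then 1 else 0)"

definition Xf :: "nat \<Rightarrow> nat \<Rightarrow> vfield" where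
  "Xf n i = (mvec n (Rop n) ^^ i) (X0 n)"

definition h1 :: "nat \<Rightarrow> pt \<Rightarrow> real" where
  "h1 n x = - (\<Sum>i = 1..n. exp (x (n + i))) + (\<Sum>i = 1..n - 1. exp (x (i + 1) - x i))"

definition ham_vf :: "nat \<Rightarrow> tensor \<Rightarrow> (pt \<Rightarrow> real) \<Rightarrow> vfield" where
  "ham_vf n J h = mvec n J (\<lambda>x b. pd b h x)"

definition chi :: "nat \<Rightarrow> nat \<Rightarrow> vfield" where
  "chi n j = (mvec n (Rop n) ^^ (j - 1)) (ham_vf n (\<lambda>x. J2 n) (h1 n))"

definition vapp :: "nat \<Rightarrow> vfield \<Rightarrow> (pt \<Rightarrow> real) \<Rightarrow> pt \<Rightarrow> real" where
  "vapp n X f x = (\<Sum>a = 1..2 * n. X x a * pd a f x)"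

definition lie_bracket :: "nat \<Rightarrow> vfield \<Rightarrow> vfield \<Rightarrow> vfield" where
  "lie_bracket n X Y x a = vapp n X (\<lambda>y. Y y a) x - vapp n Y (\<lambda>y. X y a) x"

definition lie_deriv :: "nat \<Rightarrow> vfield \<Rightarrow> tensor \<Rightarrow> tensor" where
  "lie_deriv n X P x a b = vapp n X (\<lambda>y. P y a b) x
     - (\<Sum>c = 1..2 * n. P x c b * pd c (\<lambda>y. X y a) x)
     - (\<Sum>c = 1..2 * n. P x a c * pd c (\<lambda>y. X y b) x)"

end

theory Submission
  imports Defs
begin

text \<open>
  The recursion operator \<open>R = J\<^sub>3 J\<^sub>2\<^sup>-\<^sup>1\<close> has three structural properties: its Nijenhuis torsion
  vanishes, it is homogeneous of degree one along \<open>X\<^sub>0\<close> (\<open>L\<^bsub>X\<^sub>0\<^esub> R = R\<close>), and \<open>\<omega> R\<close> is a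
  closed 2-form for the symplectic form \<open>\<omega> = J\<^sub>2\<^sup>-\<^sup>1\<close>. Vanishing torsion gives
  \<open>L\<^bsub>R X\<^esub> R = R L\<^bsub>X\<^esub> R\<close>, so by induction \<open>L\<^bsub>X\<^sub>i\<^esub> R\<^sup>j = j R\<^sup>i\<^sup>+\<^sup>j\<close>; the bracket relations follow from
  \<open>[X, R\<^sup>j Y] = (L\<^bsub>X\<^esub> R\<^sup>j) Y + R\<^sup>j [X, Y]\<close>. Closedness of \<open>\<omega> R\<close> gives \<open>L\<^bsub>X\<^sub>i\<^esub> \<omega> = i \<omega> R\<^sup>i\<close>, hence
  \<open>L\<^bsub>X\<^sub>i\<^esub> J\<^sub>2 = -i R\<^sup>i J\<^sub>2\<close> and, by the Leibniz rule, \<open>L\<^bsub>X\<^sub>i\<^esub> J\<^sub>j = (j - i - 2) J\<^sub>i\<^sub>+\<^sub>j\<close>. The Hamiltonians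
  are \<open>h\<^sub>j = tr R\<^sup>j / (2j)\<close>: from \<open>X(tr A) = tr (L\<^bsub>X\<^esub> A)\<close> one gets \<open>X\<^sub>i(h\<^sub>j) = (i + j) h\<^sub>i\<^sub>+\<^sub>j\<close>, and
  vanishing torsion gives the Lenard recursion \<open>d h\<^sub>j\<^sub>+\<^sub>1 = R\<^sup>T d h\<^sub>j\<close>, i.e. \<open>\<chi>\<^sub>j = J\<^sub>2 \<nabla>h\<^sub>j\<close>.
  For the Toda operator these properties are verified by writing \<open>R\<close> as a sum, over the
  exponentials \<open>exp \<langle>l\<^sub>k, x\<rangle>\<close> occurring in \<open>h\<^sub>1\<close>, of constant matrices of rank two; the torsion then
  becomes a sum over pairs of terms in which the contributions of \<open>(k, l)\<close> and \<open>(l, k)\<close> cancel.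
\<close>

section \<open>Partial derivatives\<close>

text \<open>Differentiability in each coordinate separately. The identities below only ever
  differentiate once, so no further regularity is needed.\<close>
definition pdiff :: "(pt \<Rightarrow> real) \<Rightarrow> bool" where
  "pdiff f \<longleftrightarrow> (\<forall>x c. (\<lambda>t. f (x(c := t))) differentiable (at (x c)))"

lemma has_pd: "pdiff f \<Longrightarrow> ((\<lambda>t. f (x(c := t))) has_real_derivative pd c f x) (at (x c))"
  unfolding pdiff_def pd_def using DERIV_deriv_iff_real_differentiable by blast

lemma pd_eqI: "((\<lambda>t. f (x(c := t))) has_real_derivative D) (at (x c)) \<Longrightarrow> pd c f x = D"
  unfolding pd_def by (rule DERIV_imp_deriv)

lemma pdiffI: "(\<And>x c. \<exists>D. ((\<lambda>t. f (x(c := t))) has_real_derivative D) (at (x c))) \<Longrightarrow> pdiff f"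
  unfolding pdiff_def using real_differentiable_def by blast

lemma pdiff_const [simp]: "pdiff (\<lambda>y. k)"
  by (rule pdiffI) (auto intro: DERIV_const)

lemma pd_const [simp]: "pd c (\<lambda>y. k) x = 0"
  by (rule pd_eqI) (rule DERIV_const)

lemma pdiff_add: "pdiff f \<Longrightarrow> pdiff g \<Longrightarrow> pdiff (\<lambda>y. f y + g y)"
  by (rule pdiffI) (metis DERIV_add has_pd)

lemma pdiff_diff: "pdiff f \<Longrightarrow> pdiff g \<Longrightarrow> pdiff (\<lambda>y. f y - g y)"
  by (rule pdiffI) (metis DERIV_diff has_pd)

lemma pd_diff: "pdiff f \<Longrightarrow> pdiff g \<Longrightarrow> pd c (\<lambda>y. f y - g y) x = pd c f x - pd c g x"
  by (rule pd_eqI) (auto intro: DERIV_diff has_pd)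

lemma pdiff_minus: "pdiff f \<Longrightarrow> pdiff (\<lambda>y. - f y)"
  by (rule pdiffI) (metis DERIV_minus has_pd)

lemma pd_minus: "pdiff f \<Longrightarrow> pd c (\<lambda>y. - f y) x = - pd c f x"
  by (rule pd_eqI) (auto intro: DERIV_minus has_pd)

lemma pdiff_mult:
  assumes "pdiff f" "pdiff g"
  shows "pdiff (\<lambda>y. f y * g y)"
proof (rule pdiffI)
  show "\<exists>D. ((\<lambda>t. f (x(c := t)) * g (x(c := t))) has_real_derivative D) (at (x c))" for x c
    using DERIV_mult[OF has_pd[OF assms(1), of x c] has_pd[OF assms(2), of x c]] by blast
qed

lemma pd_mult: "pdiff f \<Longrightarrow> pdiff g \<Longrightarrow> pd c (\<lambda>y. f y * g y) x = pd c f x * g x + f x * pd c g x"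
  using DERIV_mult[OF has_pd[of f x c] has_pd[of g x c]] by (intro pd_eqI) (simp add: mult.commute)

lemma pdiff_multc: "pdiff f \<Longrightarrow> pdiff (\<lambda>y. f y * k)"
  using pdiff_mult[OF _ pdiff_const] by blast

lemma pd_multc: "pdiff f \<Longrightarrow> pd c (\<lambda>y. f y * k) x = pd c f x * k"
  by (subst pd_mult) auto

lemma pdiff_cmult: "pdiff f \<Longrightarrow> pdiff (\<lambda>y. k * f y)"
  using pdiff_mult[OF pdiff_const] by blast

lemma pd_cmult: "pdiff f \<Longrightarrow> pd c (\<lambda>y. k * f y) x = k * pd c f x"
  by (subst pd_mult) auto

lemma pd_divide: "pdiff f \<Longrightarrow> pd c (\<lambda>y. f y / k) x = pd c f x / k"
  using pd_multc[of f c "inverse k" x] by (simp add: divide_inverse)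

lemma pdiff_sum: "(\<And>i. i \<in> A \<Longrightarrow> pdiff (f i)) \<Longrightarrow> pdiff (\<lambda>y. \<Sum>i\<in>A. f i y)"
  by (induction A rule: infinite_finite_induct) (auto simp: pdiff_add)

lemma pd_sum:
  "(\<And>i. i \<in> A \<Longrightarrow> pdiff (f i)) \<Longrightarrow> pd c (\<lambda>y. \<Sum>i\<in>A. f i y) x = (\<Sum>i\<in>A. pd c (f i) x)"
proof (induction A rule: infinite_finite_induct)
  case (insert a A)
  have "pd c (\<lambda>y. f a y + (\<Sum>i\<in>A. f i y)) x = pd c (f a) x + pd c (\<lambda>y. \<Sum>i\<in>A. f i y) x"
    using insert by (intro pd_eqI DERIV_add has_pd pdiff_sum) auto
  with insert show ?case by simp
qed simp_all

lemma pdiff_exp: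
  assumes "pdiff f"
  shows "pdiff (\<lambda>y. exp (f y))"
proof (rule pdiffI)
  show "\<exists>D. ((\<lambda>t. exp (f (x(c := t)))) has_real_derivative D) (at (x c))" for x c
    using DERIV_chain2[OF DERIV_exp has_pd[OF assms, of x c]] by blast
qed

lemma pd_exp: "pdiff f \<Longrightarrow> pd c (\<lambda>y. exp (f y)) x = exp (f x) * pd c f x"
  using DERIV_chain2[OF DERIV_exp has_pd[of f x c]] by (intro pd_eqI) simp

lemma pdiff_coord [simp]: "pdiff (\<lambda>y. y i)"
proof (rule pdiffI)
  show "\<exists>D. ((\<lambda>t. (x(c := t)) i) has_real_derivative D) (at (x c))" for x c
    by (cases "c = i") (auto intro: DERIV_ident DERIV_const)
qed

lemma pd_coord: "pd c (\<lambda>y. y i) x = (if c = i then 1 else 0)"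
  by (rule pd_eqI) (auto intro: DERIV_ident DERIV_const)

lemma pdiff_if: "pdiff f \<Longrightarrow> pdiff g \<Longrightarrow> pdiff (\<lambda>y. if P then f y else g y)"
  by (cases P) auto

section \<open>Matrix fields\<close>

abbreviation Ix :: "nat \<Rightarrow> nat set" where "Ix n \<equiv> {1..2 * n}"

lemma mmul_assoc: "mmul n (mmul n A B) C x a b = mmul n A (mmul n B C) x a b"
  unfolding mmul_def by (simp add: sum_distrib_left sum_distrib_right mult.assoc) (rule sum.swap)

lemma mmul_cong_left:
  "(\<And>c. c \<in> Ix n \<Longrightarrow> A x a c = A' x a c) \<Longrightarrow> mmul n A B x a b = mmul n A' B x a b"
  unfolding mmul_def by (intro sum.cong) auto

lemma mmul_cong_right:
  "(\<And>c. c \<in> Ix n \<Longrightarrow> B x c b = B' x c b) \<Longrightarrow> mmul n A B x a b = mmul n A B' x a b"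
  unfolding mmul_def by (intro sum.cong) auto

lemma mmul_scale_left: "mmul n (\<lambda>x a b. k * A x a b) B x a b = k * mmul n A B x a b"
  unfolding mmul_def by (simp add: sum_distrib_left mult.assoc)

lemma mmul_scale_right: "mmul n A (\<lambda>x a b. k * B x a b) x a b = k * mmul n A B x a b"
  unfolding mmul_def by (simp add: sum_distrib_left algebra_simps)

lemma mmul_mid_left: "a \<in> Ix n \<Longrightarrow> mmul n (mid n) B x a b = B x a b"
proof -
  assume a: "a \<in> Ix n"
  have "mmul n (mid n) B x a b = (\<Sum>c\<in>Ix n. if c = a then B x a b else 0)"
    unfolding mmul_def mid_def using a by (intro sum.cong) auto
  then show ?thesis using a by simp
qed

lemma mmul_mid_right: "b \<in> Ix n \<Longrightarrow> mmul n B (mid n) x a b = B x a b"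
proof -
  assume b: "b \<in> Ix n"
  have "mmul n B (mid n) x a b = (\<Sum>c\<in>Ix n. if c = b then B x a b else 0)"
    unfolding mmul_def mid_def using b by (intro sum.cong) auto
  then show ?thesis using b by simp
qed

lemma mpow_add: "a \<in> Ix n \<Longrightarrow> mmul n (mpow n A i) (mpow n A j) x a b = mpow n A (i + j) x a b"
proof (induction i arbitrary: a)
  case (Suc i)
  have "mmul n (mpow n A (Suc i)) (mpow n A j) x a b
      = mmul n A (mmul n (mpow n A i) (mpow n A j)) x a b"
    by (simp add: mmul_assoc)
  also have "\<dots> = mmul n A (mpow n A (i + j)) x a b"
    using Suc.IH by (intro mmul_cong_right) auto
  finally show ?case by simp
qed (simp add: mmul_mid_left)

lemma mpow_Suc_right:
  assumes "a \<in> Ix n" "b \<in> Ix n"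
  shows "mpow n A (Suc k) x a b = mmul n (mpow n A k) A x a b"
proof -
  have "mpow n A (Suc k) x a b = mmul n (mpow n A k) (mpow n A 1) x a b"
    using mpow_add[OF assms(1), of A k 1] by simp
  also have "\<dots> = mmul n (mpow n A k) A x a b"
    using assms(2) by (intro mmul_cong_right) (simp add: mmul_mid_right)
  finally show ?thesis .
qed

lemma mvec_cong: "(\<And>c. c \<in> Ix n \<Longrightarrow> X x c = X' x c) \<Longrightarrow> mvec n A X x a = mvec n A X' x a"
  unfolding mvec_def by (intro sum.cong) auto

lemma mvec_mmul: "mvec n (mmul n A B) X x a = mvec n A (mvec n B X) x a"
  unfolding mvec_def mmul_def by (simp add: sum_distrib_left sum_distrib_right mult.assoc) (rule sum.swap)

lemma mvec_mid: "a \<in> Ix n \<Longrightarrow> mvec n (mid n) X x a = X x a"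
proof -
  assume a: "a \<in> Ix n"
  have "mvec n (mid n) X x a = (\<Sum>c\<in>Ix n. if c = a then X x a else 0)"
    unfolding mvec_def mid_def using a by (intro sum.cong) auto
  then show ?thesis using a by simp
qed

lemma mvec_mpow_mpow:
  "a \<in> Ix n \<Longrightarrow> mvec n (mpow n A j) (mvec n (mpow n A i) X) x a = mvec n (mpow n A (j + i)) X x a"
  unfolding mvec_mmul[symmetric] by (simp add: mvec_def mpow_add)

definition mtrace :: "nat \<Rightarrow> tensor \<Rightarrow> pt \<Rightarrow> real" where
  "mtrace n A x = (\<Sum>a\<in>Ix n. A x a a)"

lemma mtrace_mmul_mid: "mtrace n (mmul n A (mid n)) x = mtrace n A x"
  unfolding mtrace_def by (intro sum.cong refl) (simp add: mmul_mid_right)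

lemma mtrace_mmul_commute: "mtrace n (mmul n A B) x = mtrace n (mmul n B A) x"
  unfolding mtrace_def mmul_def by (subst sum.swap) (simp add: mult.commute)

lemma mtrace_mmul_cong_left:
  "(\<And>a c. a \<in> Ix n \<Longrightarrow> c \<in> Ix n \<Longrightarrow> A x a c = A' x a c) \<Longrightarrow>
   mtrace n (mmul n A B) x = mtrace n (mmul n A' B) x"
  unfolding mtrace_def mmul_def by (intro sum.cong refl) auto

lemma mtrace_mmul_cong_right:
  "(\<And>a c. a \<in> Ix n \<Longrightarrow> c \<in> Ix n \<Longrightarrow> B x a c = B' x a c) \<Longrightarrow>
   mtrace n (mmul n A B) x = mtrace n (mmul n A B') x"
  unfolding mtrace_def mmul_def by (intro sum.cong refl) auto

section \<open>Lie derivatives\<close>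

definition pdiff_tensor :: "tensor \<Rightarrow> bool" where
  "pdiff_tensor A \<longleftrightarrow> (\<forall>a b. pdiff (\<lambda>y. A y a b))"

definition pdiff_vfield :: "vfield \<Rightarrow> bool" where
  "pdiff_vfield X \<longleftrightarrow> (\<forall>a. pdiff (\<lambda>y. X y a))"

lemma pdiff_tensor_const: "pdiff_tensor (\<lambda>x. M)"
  unfolding pdiff_tensor_def by simp

lemma pdiff_tensor_mmul: "pdiff_tensor A \<Longrightarrow> pdiff_tensor B \<Longrightarrow> pdiff_tensor (mmul n A B)"
  unfolding pdiff_tensor_def mmul_def by (auto intro!: pdiff_sum pdiff_mult)

lemma pdiff_tensor_mid: "pdiff_tensor (mid n)"
  unfolding pdiff_tensor_def mid_def by simp

lemma pdiff_tensor_mpow: "pdiff_tensor A \<Longrightarrow> pdiff_tensor (mpow n A k)"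
  by (induction k) (auto simp: pdiff_tensor_mid pdiff_tensor_mmul)

lemma pdiff_vfield_mvec: "pdiff_tensor A \<Longrightarrow> pdiff_vfield X \<Longrightarrow> pdiff_vfield (mvec n A X)"
  unfolding pdiff_tensor_def pdiff_vfield_def mvec_def by (auto intro!: pdiff_sum pdiff_mult)

lemma pdiff_mtrace: "pdiff_tensor A \<Longrightarrow> pdiff (mtrace n A)"
  unfolding mtrace_def pdiff_tensor_def by (auto intro!: pdiff_sum)

lemma pd_mmul:
  "pdiff_tensor A \<Longrightarrow> pdiff_tensor B \<Longrightarrow> pd c (\<lambda>y. mmul n A B y a b) x =
     (\<Sum>e\<in>Ix n. pd c (\<lambda>y. A y a e) x * B x e b + A x a e * pd c (\<lambda>y. B y e b) x)"
  unfolding mmul_def pdiff_tensor_def by (simp add: pd_sum pdiff_mult pd_mult)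

lemma pd_mvec:
  "pdiff_tensor A \<Longrightarrow> pdiff_vfield X \<Longrightarrow> pd c (\<lambda>y. mvec n A X y a) x =
     (\<Sum>e\<in>Ix n. pd c (\<lambda>y. A y a e) x * X x e + A x a e * pd c (\<lambda>y. X y e) x)"
  unfolding mvec_def pdiff_tensor_def pdiff_vfield_def by (simp add: pd_sum pdiff_mult pd_mult)

lemma vapp_divide: "pdiff f \<Longrightarrow> vapp n X (\<lambda>y. f y / k) x = vapp n X f x / k"
  unfolding vapp_def by (simp add: pd_divide sum_divide_distrib)

text \<open>Lie derivative of a field of endomorphisms \<open>A\<^sup>a\<^sub>b\<close>; the \<open>lie_deriv\<close> of the
  definitions is the one for bivectors.\<close>
definition lie_deriv_endo :: "nat \<Rightarrow> vfield \<Rightarrow> tensor \<Rightarrow> tensor" where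
  "lie_deriv_endo n X A x a b = vapp n X (\<lambda>y. A y a b) x
     - (\<Sum>c\<in>Ix n. A x c b * pd c (\<lambda>y. X y a) x)
     + (\<Sum>c\<in>Ix n. A x a c * pd b (\<lambda>y. X y c) x)"

definition nijenhuis :: "nat \<Rightarrow> tensor \<Rightarrow> pt \<Rightarrow> nat \<Rightarrow> nat \<Rightarrow> nat \<Rightarrow> real" where
  "nijenhuis n R x a b c =
     (\<Sum>d\<in>Ix n. R x d b * pd d (\<lambda>y. R y a c) x - R x d c * pd d (\<lambda>y. R y a b) x)
     - (\<Sum>d\<in>Ix n. R x a d * (pd b (\<lambda>y. R y d c) x - pd c (\<lambda>y. R y d b) x))"

text \<open>The bilinear identities below are closed by this symmetrisation of double sums.\<close>
lemma sum_sum_eq_symmetrised: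
  assumes "\<And>c e. c \<in> A \<Longrightarrow> e \<in> A \<Longrightarrow> f c e + f e c = g c e + g e c"
  shows "(\<Sum>c\<in>A. \<Sum>e\<in>A. f c e) = (\<Sum>c\<in>A. \<Sum>e\<in>A. (g c e :: real))"
proof -
  have swap: "(\<Sum>c\<in>A. \<Sum>e\<in>A. h c e) = (\<Sum>c\<in>A. \<Sum>e\<in>A. h e c)" for h :: "_ \<Rightarrow> _ \<Rightarrow> real"
    by (rule sum.swap)
  have "2 * (\<Sum>c\<in>A. \<Sum>e\<in>A. f c e) = (\<Sum>c\<in>A. \<Sum>e\<in>A. f c e + f e c)"
    using swap[of f] by (simp add: sum.distrib)
  also have "\<dots> = (\<Sum>c\<in>A. \<Sum>e\<in>A. g c e + g e c)"
    using assms by (simp cong: sum.cong)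
  also have "\<dots> = 2 * (\<Sum>c\<in>A. \<Sum>e\<in>A. g c e)"
    using swap[of g] by (simp add: sum.distrib)
  finally show ?thesis by simp
qed

lemma lie_bracket_mvec:
  assumes "pdiff_tensor A" "pdiff_vfield Y"
  shows "lie_bracket n X (mvec n A Y) x a =
     (\<Sum>b\<in>Ix n. lie_deriv_endo n X A x a b * Y x b) + mvec n A (lie_bracket n X Y) x a"
proof -
  have "lie_bracket n X (mvec n A Y) x a =
      (\<Sum>c\<in>Ix n. X x c * (\<Sum>b\<in>Ix n. pd c (\<lambda>y. A y a b) x * Y x b + A x a b * pd c (\<lambda>y. Y y b) x))
      - (\<Sum>c\<in>Ix n. (\<Sum>b\<in>Ix n. A x c b * Y x b) * pd c (\<lambda>y. X y a) x)"
    unfolding lie_bracket_def vapp_def by (simp only: pd_mvec[OF assms]) (simp add: mvec_def)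
  also have "\<dots> = (\<Sum>b\<in>Ix n. lie_deriv_endo n X A x a b * Y x b) + mvec n A (lie_bracket n X Y) x a"
    unfolding lie_deriv_endo_def vapp_def mvec_def lie_bracket_def
    apply (simp add: sum_distrib_left sum_distrib_right sum.distrib sum_subtractf algebra_simps)
    apply (subst (1 2 3 4) sum.swap)
    apply (simp add: algebra_simps)
    done
  finally show ?thesis .
qed

lemma lie_bracket_cong_right:
  assumes "\<And>y. Y y a = Y' y a" "\<And>c. c \<in> Ix n \<Longrightarrow> Y x c = Y' x c"
  shows "lie_bracket n X Y x a = lie_bracket n X Y' x a"
proof -
  have "(\<lambda>y. Y y a) = (\<lambda>y. Y' y a)" using assms(1) by auto
  moreover have "(\<Sum>c\<in>Ix n. Y x c * pd c (\<lambda>y. X y a) x) = (\<Sum>c\<in>Ix n. Y' x c * pd c (\<lambda>y. X y a) x)"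
    using assms(2) by (intro sum.cong) auto
  ultimately show ?thesis unfolding lie_bracket_def vapp_def by simp
qed

lemma lie_deriv_endo_mmul:
  assumes "pdiff_tensor A" "pdiff_tensor B"
  shows "lie_deriv_endo n X (mmul n A B) x a b =
           mmul n (lie_deriv_endo n X A) B x a b + mmul n A (lie_deriv_endo n X B) x a b"
  unfolding lie_deriv_endo_def vapp_def
  apply (simp only: pd_mmul[OF assms])
  unfolding mmul_def lie_deriv_endo_def vapp_def
  apply (simp only: sum_distrib_left sum_distrib_right ring_distribs sum.distrib sum_subtractf sum_negf)
  apply (simp only: sum.distrib[symmetric] sum_subtractf[symmetric])
  apply (rule sum_sum_eq_symmetrised)
  apply (simp add: algebra_simps)
  done

lemma lie_deriv_mmul:
  assumes "pdiff_tensor A" "pdiff_tensor B"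
  shows "lie_deriv n X (mmul n A B) x a b =
           mmul n (lie_deriv_endo n X A) B x a b + mmul n A (lie_deriv n X B) x a b"
  unfolding lie_deriv_def vapp_def
  apply (simp only: pd_mmul[OF assms])
  unfolding mmul_def lie_deriv_endo_def vapp_def
  apply (simp only: sum_distrib_left sum_distrib_right ring_distribs sum.distrib sum_subtractf sum_negf)
  apply (simp only: sum.distrib[symmetric] sum_subtractf[symmetric])
  apply (rule sum_sum_eq_symmetrised)
  apply (simp add: algebra_simps)
  done

lemma lie_deriv_endo_mid:
  assumes "a \<in> Ix n" "b \<in> Ix n"
  shows "lie_deriv_endo n X (mid n) x a b = 0"
proof -
  have "vapp n X (\<lambda>y. mid n y a b) x = 0" unfolding vapp_def mid_def by simp
  moreover have "(\<Sum>c\<in>Ix n. mid n x c b * pd c (\<lambda>y. X y a) x) = pd b (\<lambda>y. X y a) x"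
  proof -
    have "(\<Sum>c\<in>Ix n. mid n x c b * pd c (\<lambda>y. X y a) x)
        = (\<Sum>c\<in>Ix n. if c = b then pd b (\<lambda>y. X y a) x else 0)"
      using assms unfolding mid_def by (intro sum.cong) auto
    then show ?thesis using assms by simp
  qed
  moreover have "(\<Sum>c\<in>Ix n. mid n x a c * pd b (\<lambda>y. X y c) x) = pd b (\<lambda>y. X y a) x"
  proof -
    have "(\<Sum>c\<in>Ix n. mid n x a c * pd b (\<lambda>y. X y c) x)
        = (\<Sum>c\<in>Ix n. if c = a then pd b (\<lambda>y. X y a) x else 0)"
      using assms unfolding mid_def by (intro sum.cong) auto
    then show ?thesis using assms by simp
  qed
  ultimately show ?thesis unfolding lie_deriv_endo_def by simp
qed

text \<open>The difference of the two sides is \<open>X\<close> contracted into the Nijenhuis torsion of \<open>R\<close>.\<close>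
lemma lie_deriv_endo_mvec_self:
  assumes R: "pdiff_tensor R" and X: "pdiff_vfield X" and ab: "a \<in> Ix n" "b \<in> Ix n"
    and N: "\<And>d. d \<in> Ix n \<Longrightarrow> nijenhuis n R x a d b = 0"
  shows "lie_deriv_endo n (mvec n R X) R x a b = mmul n R (lie_deriv_endo n X R) x a b"
proof -
  have "lie_deriv_endo n (mvec n R X) R x a b - mmul n R (lie_deriv_endo n X R) x a b
     = (\<Sum>d\<in>Ix n. X x d * nijenhuis n R x a d b)"
    unfolding lie_deriv_endo_def vapp_def
    apply (simp only: pd_mvec[OF R X])
    unfolding mmul_def lie_deriv_endo_def vapp_def mvec_def nijenhuis_def
    apply (simp only: sum_distrib_left sum_distrib_right ring_distribs sum.distrib sum_subtractf
        sum_negf right_diff_distrib)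
    apply (simp only: sum.distrib[symmetric] sum_subtractf[symmetric])
    apply (rule sum_sum_eq_symmetrised)
    apply (simp add: algebra_simps)
    done
  then show ?thesis using N by simp
qed

lemma vapp_mtrace:
  assumes "pdiff_tensor A"
  shows "vapp n X (mtrace n A) x = mtrace n (lie_deriv_endo n X A) x"
proof -
  have "vapp n X (mtrace n A) x = (\<Sum>c\<in>Ix n. X x c * (\<Sum>a\<in>Ix n. pd c (\<lambda>y. A y a a) x))"
    unfolding vapp_def mtrace_def using assms unfolding pdiff_tensor_def by (simp add: pd_sum)
  also have "\<dots> = mtrace n (lie_deriv_endo n X A) x"
    unfolding mtrace_def lie_deriv_endo_def vapp_def
    apply (simp only: sum_distrib_left sum_distrib_right ring_distribs sum.distrib sum_subtractf sum_negf)
    apply (simp only: sum.distrib[symmetric] sum_subtractf[symmetric])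
    apply (rule sum_sum_eq_symmetrised)
    apply (simp add: algebra_simps)
    done
  finally show ?thesis .
qed

section \<open>Homogeneous Nijenhuis operators and their master symmetries\<close>

lemma pd_X0: "pd c (\<lambda>y. X0 n y a) x = 0"
  by (simp add: X0_def)

lemma pdiff_vfield_X0: "pdiff_vfield (X0 n)"
  unfolding pdiff_vfield_def X0_def by simp

locale homogeneous_nijenhuis =
  fixes n :: nat and R :: tensor
  assumes pdiff_R: "pdiff_tensor R"
    and torsion_free: "\<And>x a b c. a \<in> Ix n \<Longrightarrow> b \<in> Ix n \<Longrightarrow> c \<in> Ix n \<Longrightarrow> nijenhuis n R x a b c = 0"
    and homogeneous: "\<And>x a b. a \<in> Ix n \<Longrightarrow> b \<in> Ix n \<Longrightarrow> vapp n (X0 n) (\<lambda>y. R y a b) x = R x a b"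
begin

definition msym :: "nat \<Rightarrow> vfield" where
  "msym i = (mvec n R ^^ i) (X0 n)"

lemma msym_Suc: "msym (Suc i) = mvec n R (msym i)"
  unfolding msym_def by simp

lemma pdiff_vfield_msym: "pdiff_vfield (msym i)"
  by (induction i) (auto simp: msym_def pdiff_vfield_X0 pdiff_vfield_mvec pdiff_R)

lemma pdiff_tensor_mpow_R: "pdiff_tensor (mpow n R k)"
  by (rule pdiff_tensor_mpow[OF pdiff_R])

lemma msym_eq_mvec_mpow: "a \<in> Ix n \<Longrightarrow> msym j x a = mvec n (mpow n R j) (X0 n) x a"
proof (induction j arbitrary: a)
  case (Suc j)
  have "msym (Suc j) x a = mvec n R (mvec n (mpow n R j) (X0 n)) x a"
    unfolding msym_Suc using Suc.IH by (intro mvec_cong) auto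
  then show ?case by (simp add: mvec_mmul)
qed (simp add: msym_def mvec_mid)

lemma lie_deriv_endo_msym_R:
  "a \<in> Ix n \<Longrightarrow> b \<in> Ix n \<Longrightarrow> lie_deriv_endo n (msym i) R x a b = mpow n R (Suc i) x a b"
proof (induction i arbitrary: a b)
  case 0
  then show ?case
    by (simp add: lie_deriv_endo_def msym_def pd_X0 homogeneous mmul_mid_right)
next
  case (Suc i)
  have "lie_deriv_endo n (msym (Suc i)) R x a b = mmul n R (lie_deriv_endo n (msym i) R) x a b"
    unfolding msym_Suc using Suc.prems
    by (intro lie_deriv_endo_mvec_self pdiff_R pdiff_vfield_msym torsion_free)
  also have "\<dots> = mmul n R (mpow n R (Suc i)) x a b"
    using Suc by (intro mmul_cong_right) auto
  finally show ?case by simp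
qed

lemma lie_deriv_endo_msym_mpow:
  "a \<in> Ix n \<Longrightarrow> b \<in> Ix n \<Longrightarrow>
   lie_deriv_endo n (msym i) (mpow n R j) x a b = real j * mpow n R (i + j) x a b"
proof (induction j arbitrary: a b)
  case (Suc j)
  have "lie_deriv_endo n (msym i) (mpow n R (Suc j)) x a b =
     mmul n (lie_deriv_endo n (msym i) R) (mpow n R j) x a b
     + mmul n R (lie_deriv_endo n (msym i) (mpow n R j)) x a b"
    by (simp add: lie_deriv_endo_mmul pdiff_R pdiff_tensor_mpow_R)
  also have "mmul n (lie_deriv_endo n (msym i) R) (mpow n R j) x a b
      = mmul n (mpow n R (Suc i)) (mpow n R j) x a b"
    using Suc.prems by (intro mmul_cong_left) (simp add: lie_deriv_endo_msym_R)
  also have "\<dots> = mpow n R (Suc i + j) x a b"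
    by (rule mpow_add[OF Suc.prems(1)])
  also have "mmul n R (lie_deriv_endo n (msym i) (mpow n R j)) x a b
      = mmul n R (\<lambda>x a b. real j * mpow n R (i + j) x a b) x a b"
    using Suc by (intro mmul_cong_right) auto
  finally show ?case by (simp add: mmul_scale_right algebra_simps)
qed (simp add: lie_deriv_endo_mid)

lemma lie_bracket_msym_mvec_mpow:
  assumes "a \<in> Ix n"
  shows "lie_bracket n (msym i) (msym j) x a =
     real j * msym (i + j) x a + mvec n (mpow n R j) (lie_bracket n (msym i) (X0 n)) x a"
proof -
  have "lie_bracket n (msym i) (msym j) x a = lie_bracket n (msym i) (mvec n (mpow n R j) (X0 n)) x a"
    using assms by (intro lie_bracket_cong_right) (auto simp: msym_eq_mvec_mpow)
  also have "\<dots> = (\<Sum>b\<in>Ix n. lie_deriv_endo n (msym i) (mpow n R j) x a b * X0 n x b)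
      + mvec n (mpow n R j) (lie_bracket n (msym i) (X0 n)) x a"
    by (rule lie_bracket_mvec[OF pdiff_tensor_mpow_R pdiff_vfield_X0])
  also have "(\<Sum>b\<in>Ix n. lie_deriv_endo n (msym i) (mpow n R j) x a b * X0 n x b)
      = (\<Sum>b\<in>Ix n. real j * mpow n R (i + j) x a b * X0 n x b)"
    using lie_deriv_endo_msym_mpow[OF assms] by (intro sum.cong) auto
  also have "\<dots> = real j * msym (i + j) x a"
    using assms by (simp add: msym_eq_mvec_mpow mvec_def sum_distrib_left mult.assoc)
  finally show ?thesis .
qed

lemma lie_bracket_X0_msym: "a \<in> Ix n \<Longrightarrow> lie_bracket n (X0 n) (msym i) x a = real i * msym i x a"
  using lie_bracket_msym_mvec_mpow[of a 0 i] by (simp add: msym_def lie_bracket_def mvec_def)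

lemma lie_bracket_msym:
  assumes "a \<in> Ix n"
  shows "lie_bracket n (msym i) (msym j) x a = (real j - real i) * msym (i + j) x a"
proof -
  have "mvec n (mpow n R j) (lie_bracket n (msym i) (X0 n)) x a
      = mvec n (mpow n R j) (\<lambda>x b. - real i * mvec n (mpow n R i) (X0 n) x b) x a"
  proof (rule mvec_cong)
    fix c assume c: "c \<in> Ix n"
    have "lie_bracket n (msym i) (X0 n) x c = - lie_bracket n (X0 n) (msym i) x c"
      unfolding lie_bracket_def by simp
    with c show "lie_bracket n (msym i) (X0 n) x c = - real i * mvec n (mpow n R i) (X0 n) x c"
      by (simp add: lie_bracket_X0_msym msym_eq_mvec_mpow)
  qed
  also have "\<dots> = - real i * mvec n (mpow n R j) (mvec n (mpow n R i) (X0 n)) x a"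
    by (simp add: mvec_def sum_distrib_left algebra_simps)
  also have "\<dots> = - real i * msym (i + j) x a"
    using assms by (simp add: mvec_mpow_mpow msym_eq_mvec_mpow add.commute)
  finally show ?thesis
    using lie_bracket_msym_mvec_mpow[OF assms] by (simp add: algebra_simps)
qed

end

definition coord_vfield :: "nat \<Rightarrow> vfield" where
  "coord_vfield b = (\<lambda>y a. if a = b then 1 else 0)"

lemma pdiff_vfield_coord: "pdiff_vfield (coord_vfield b)"
  unfolding pdiff_vfield_def coord_vfield_def by simp

lemma vapp_coord_vfield: "b \<in> Ix n \<Longrightarrow> vapp n (coord_vfield b) f x = pd b f x"
proof -
  assume b: "b \<in> Ix n"
  have "vapp n (coord_vfield b) f x = (\<Sum>c\<in>Ix n. if c = b then pd b f x else 0)"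
    unfolding vapp_def coord_vfield_def by (intro sum.cong) auto
  then show ?thesis using b by simp
qed

lemma mvec_coord_vfield: "b \<in> Ix n \<Longrightarrow> mvec n R (coord_vfield b) x c = R x c b"
proof -
  assume b: "b \<in> Ix n"
  have "mvec n R (coord_vfield b) x c = (\<Sum>d\<in>Ix n. if d = b then R x c b else 0)"
    unfolding mvec_def coord_vfield_def by (intro sum.cong) auto
  then show ?thesis using b by simp
qed

context homogeneous_nijenhuis
begin

lemma mtrace_mmul_lie_deriv_endo_mpow:
  assumes X: "pdiff_vfield X"
  shows "mtrace n (mmul n (mpow n R j) (lie_deriv_endo n X (mpow n R k))) x
       = real k * mtrace n (mmul n (mpow n R (j + k - 1)) (lie_deriv_endo n X R)) x"
proof (induction k arbitrary: j)
  case 0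
  have "mtrace n (mmul n (mpow n R j) (lie_deriv_endo n X (mpow n R 0))) x
      = mtrace n (mmul n (mpow n R j) (\<lambda>x a b. 0)) x"
    by (rule mtrace_mmul_cong_right) (simp add: lie_deriv_endo_mid)
  then show ?case by (simp add: mtrace_def mmul_def)
next
  case (Suc k)
  let ?L = "lie_deriv_endo n X R"
  have "mtrace n (mmul n (mpow n R j) (lie_deriv_endo n X (mpow n R (Suc k)))) x
     = mtrace n (mmul n (mpow n R j) (\<lambda>x a b. mmul n ?L (mpow n R k) x a b
         + mmul n R (lie_deriv_endo n X (mpow n R k)) x a b)) x"
    by (rule mtrace_mmul_cong_right) (simp add: lie_deriv_endo_mmul pdiff_R pdiff_tensor_mpow_R)
  also have "\<dots> = mtrace n (mmul n (mpow n R j) (mmul n ?L (mpow n R k))) x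
      + mtrace n (mmul n (mpow n R j) (mmul n R (lie_deriv_endo n X (mpow n R k)))) x"
    by (simp add: mtrace_def mmul_def ring_distribs sum.distrib)
  also have "mtrace n (mmul n (mpow n R j) (mmul n ?L (mpow n R k))) x
      = mtrace n (mmul n (mpow n R (j + k)) ?L) x"
  proof -
    have "mtrace n (mmul n (mpow n R j) (mmul n ?L (mpow n R k))) x
        = mtrace n (mmul n (mmul n (mpow n R j) ?L) (mpow n R k)) x"
      by (simp add: mtrace_def mmul_assoc)
    also have "\<dots> = mtrace n (mmul n (mpow n R k) (mmul n (mpow n R j) ?L)) x"
      by (rule mtrace_mmul_commute)
    also have "\<dots> = mtrace n (mmul n (mmul n (mpow n R k) (mpow n R j)) ?L) x"
      by (simp add: mtrace_def mmul_assoc)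
    also have "\<dots> = mtrace n (mmul n (mpow n R (k + j)) ?L) x"
      by (rule mtrace_mmul_cong_left) (simp add: mpow_add)
    finally show ?thesis by (simp add: add.commute)
  qed
  also have "mtrace n (mmul n (mpow n R j) (mmul n R (lie_deriv_endo n X (mpow n R k)))) x
      = mtrace n (mmul n (mpow n R (Suc j)) (lie_deriv_endo n X (mpow n R k))) x"
  proof -
    have "mtrace n (mmul n (mpow n R j) (mmul n R (lie_deriv_endo n X (mpow n R k)))) x
        = mtrace n (mmul n (mmul n (mpow n R j) R) (lie_deriv_endo n X (mpow n R k))) x"
      by (simp add: mtrace_def mmul_assoc)
    also have "\<dots> = mtrace n (mmul n (mpow n R (Suc j)) (lie_deriv_endo n X (mpow n R k))) x"
      by (rule mtrace_mmul_cong_left) (rule mpow_Suc_right[symmetric], auto)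
    finally show ?thesis .
  qed
  also have "\<dots> = real k * mtrace n (mmul n (mpow n R (j + k)) ?L) x"
    using Suc.IH[of "Suc j"] by simp
  finally show ?case by (simp add: algebra_simps)
qed

lemma mtrace_lie_deriv_endo_mpow:
  assumes "pdiff_vfield X"
  shows "mtrace n (lie_deriv_endo n X (mpow n R k)) x
     = real k * mtrace n (mmul n (mpow n R (k - 1)) (lie_deriv_endo n X R)) x"
proof -
  have "mtrace n (lie_deriv_endo n X (mpow n R k)) x
      = mtrace n (mmul n (mpow n R 0) (lie_deriv_endo n X (mpow n R k))) x"
    by (simp add: mtrace_def mmul_mid_left)
  then show ?thesis
    using mtrace_mmul_lie_deriv_endo_mpow[OF assms, of 0 k] by simp
qed

definition ham :: "nat \<Rightarrow> pt \<Rightarrow> real" where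
  "ham j x = mtrace n (mpow n R j) x / (2 * real j)"

lemma pdiff_mtrace_mpow_R: "pdiff (mtrace n (mpow n R k))"
  by (intro pdiff_mtrace pdiff_tensor_mpow_R)

lemma pdiff_ham: "pdiff (ham j)"
proof -
  have "ham j = (\<lambda>y. mtrace n (mpow n R j) y * inverse (2 * real j))"
    by (rule ext) (simp only: ham_def divide_inverse)
  then show ?thesis by (simp only: pdiff_multc pdiff_mtrace_mpow_R)
qed

lemma pd_mtrace_mpow_Suc:
  assumes b: "b \<in> Ix n"
  shows "pd b (mtrace n (mpow n R (Suc m))) x
     = real (Suc m) * mtrace n (mmul n (mpow n R m) (lie_deriv_endo n (coord_vfield b) R)) x"
proof -
  have "pd b (mtrace n (mpow n R (Suc m))) x = vapp n (coord_vfield b) (mtrace n (mpow n R (Suc m))) x"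
    using b by (simp add: vapp_coord_vfield)
  also have "\<dots> = mtrace n (lie_deriv_endo n (coord_vfield b) (mpow n R (Suc m))) x"
    by (rule vapp_mtrace[OF pdiff_tensor_mpow_R])
  also have "\<dots> = real (Suc m) * mtrace n (mmul n (mpow n R m) (lie_deriv_endo n (coord_vfield b) R)) x"
    using mtrace_lie_deriv_endo_mpow[OF pdiff_vfield_coord, of b "Suc m" x] by simp
  finally show ?thesis .
qed

lemma sum_R_pd_mtrace_mpow:
  assumes b: "b \<in> Ix n"
  shows "(\<Sum>c\<in>Ix n. R x c b * pd c (mtrace n (mpow n R m)) x)
       = real m * mtrace n (mmul n (mpow n R m) (lie_deriv_endo n (coord_vfield b) R)) x"
proof (cases m)
  case 0
  have "mtrace n (mid n) = (\<lambda>y. real (2 * n))"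
    by (simp add: fun_eq_iff mtrace_def mid_def)
  with 0 show ?thesis by simp
next
  case (Suc k)
  let ?L = "lie_deriv_endo n (coord_vfield b) R"
  have Y: "pdiff_vfield (mvec n R (coord_vfield b))"
    by (intro pdiff_vfield_mvec pdiff_R pdiff_vfield_coord)
  have "(\<Sum>c\<in>Ix n. R x c b * pd c (mtrace n (mpow n R m)) x)
      = vapp n (mvec n R (coord_vfield b)) (mtrace n (mpow n R m)) x"
    unfolding vapp_def using b by (simp add: mvec_coord_vfield)
  also have "\<dots> = mtrace n (lie_deriv_endo n (mvec n R (coord_vfield b)) (mpow n R m)) x"
    by (rule vapp_mtrace[OF pdiff_tensor_mpow_R])
  also have "\<dots> = real m * mtrace n (mmul n (mpow n R k) (lie_deriv_endo n (mvec n R (coord_vfield b)) R)) x"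
    by (simp only: mtrace_lie_deriv_endo_mpow[OF Y] Suc diff_Suc_1)
  also have "mtrace n (mmul n (mpow n R k) (lie_deriv_endo n (mvec n R (coord_vfield b)) R)) x
      = mtrace n (mmul n (mpow n R k) (mmul n R ?L)) x"
    by (rule mtrace_mmul_cong_right)
      (rule lie_deriv_endo_mvec_self[OF pdiff_R pdiff_vfield_coord], auto intro: torsion_free b)
  also have "\<dots> = mtrace n (mmul n (mmul n (mpow n R k) R) ?L) x"
    by (simp add: mtrace_def mmul_assoc)
  also have "\<dots> = mtrace n (mmul n (mpow n R m) ?L) x"
    unfolding Suc by (rule mtrace_mmul_cong_left) (rule mpow_Suc_right[symmetric], auto)
  finally show ?thesis .
qed

lemma pd_ham_Suc:
  assumes j: "1 \<le> j" and b: "b \<in> Ix n"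
  shows "pd b (ham (Suc j)) x = (\<Sum>c\<in>Ix n. R x c b * pd c (ham j) x)"
proof -
  let ?T = "mtrace n (mmul n (mpow n R j) (lie_deriv_endo n (coord_vfield b) R)) x"
  have "pd b (ham (Suc j)) x = pd b (mtrace n (mpow n R (Suc j))) x / (2 * real (Suc j))"
    unfolding ham_def by (rule pd_divide[OF pdiff_mtrace_mpow_R])
  also have "\<dots> = ?T / 2"
    by (simp only: pd_mtrace_mpow_Suc[OF b]) (simp add: field_simps)
  also have "\<dots> = (\<Sum>c\<in>Ix n. R x c b * pd c (mtrace n (mpow n R j)) x) / (2 * real j)"
    by (simp only: sum_R_pd_mtrace_mpow[OF b]) (use j in \<open>simp add: field_simps\<close>)
  also have "\<dots> = (\<Sum>c\<in>Ix n. R x c b * pd c (ham j) x)"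
    unfolding ham_def
    by (simp only: pd_divide[OF pdiff_mtrace_mpow_R] sum_divide_distrib times_divide_eq_right)
  finally show ?thesis .
qed

lemma vapp_msym_ham:
  assumes j: "1 \<le> j"
  shows "vapp n (msym i) (ham j) x = real (i + j) * ham (i + j) x"
proof -
  have "vapp n (msym i) (ham j) x = vapp n (msym i) (mtrace n (mpow n R j)) x / (2 * real j)"
    unfolding ham_def by (rule vapp_divide[OF pdiff_mtrace_mpow_R])
  also have "vapp n (msym i) (mtrace n (mpow n R j)) x = mtrace n (lie_deriv_endo n (msym i) (mpow n R j)) x"
    by (rule vapp_mtrace[OF pdiff_tensor_mpow_R])
  also have "\<dots> = real j * mtrace n (mpow n R (i + j)) x"
    unfolding mtrace_def by (simp add: lie_deriv_endo_msym_mpow sum_distrib_left)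
  finally show ?thesis
    using j unfolding ham_def by (simp add: field_simps)
qed

end

section \<open>The symplectic form \<open>\<omega> = J\<^sub>2\<^sup>-\<^sup>1\<close>\<close>

lemma sum_J2_mult: "a \<in> Ix n \<Longrightarrow> (\<Sum>c\<in>Ix n. J2 n a c * v c) = (if a \<le> n then v (a + n) else - v (a - n))"
proof -
  assume a: "a \<in> Ix n"
  show ?thesis
  proof (cases "a \<le> n")
    case True
    have "(\<Sum>c\<in>Ix n. J2 n a c * v c) = (\<Sum>c\<in>Ix n. if c = a + n then v (a + n) else 0)"
      using a True unfolding J2_def by (intro sum.cong) auto
    then show ?thesis using a True by simp
  next
    case False
    have "(\<Sum>c\<in>Ix n. J2 n a c * v c) = (\<Sum>c\<in>Ix n. if c = a - n then - v (a - n) else 0)"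
      using a False unfolding J2_def by (intro sum.cong) auto
    then show ?thesis using a False by auto
  qed
qed

lemma sum_mult_J2: "b \<in> Ix n \<Longrightarrow> (\<Sum>c\<in>Ix n. v c * J2 n c b) = (if b \<le> n then - v (b + n) else v (b - n))"
proof -
  assume b: "b \<in> Ix n"
  show ?thesis
  proof (cases "b \<le> n")
    case True
    have "(\<Sum>c\<in>Ix n. v c * J2 n c b) = (\<Sum>c\<in>Ix n. if c = b + n then - v (b + n) else 0)"
      using b True unfolding J2_def by (intro sum.cong) auto
    then show ?thesis using b True by simp
  next
    case False
    have "(\<Sum>c\<in>Ix n. v c * J2 n c b) = (\<Sum>c\<in>Ix n. if c = b - n then v (b - n) else 0)"
      using b False unfolding J2_def by (intro sum.cong) auto
    then show ?thesis using b False by auto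
  qed
qed

lemma sum_J2_J2inv: "a \<in> Ix n \<Longrightarrow> (\<Sum>c\<in>Ix n. J2 n a c * J2inv n c e) = (if a = e then 1 else 0)"
  unfolding J2inv_def using sum_J2_mult[of a n "\<lambda>c. - J2 n c e"]
  by (auto simp: J2_def)

lemma sum_J2inv_J2: "b \<in> Ix n \<Longrightarrow> (\<Sum>c\<in>Ix n. J2inv n e c * J2 n c b) = (if e = b then 1 else 0)"
  unfolding J2inv_def using sum_mult_J2[of b n "\<lambda>c. - J2 n e c"]
  by (auto simp: J2_def)

lemma J2inv_antisym: "J2inv n a c = - J2inv n c a"
  unfolding J2inv_def J2_def by auto

lemma sum_J2_sum_J2inv: "a \<in> Ix n \<Longrightarrow> (\<Sum>p\<in>Ix n. J2 n a p * (\<Sum>e\<in>Ix n. J2inv n p e * F e)) = F a"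
proof -
  assume a: "a \<in> Ix n"
  have "(\<Sum>p\<in>Ix n. J2 n a p * (\<Sum>e\<in>Ix n. J2inv n p e * F e)) = (\<Sum>e\<in>Ix n. (\<Sum>p\<in>Ix n. J2 n a p * J2inv n p e) * F e)"
    by (simp add: sum_distrib_left sum_distrib_right mult.assoc) (rule sum.swap)
  also have "\<dots> = (\<Sum>e\<in>Ix n. if e = a then F a else 0)"
    using a by (intro sum.cong refl) (simp only: sum_J2_J2inv[OF a], simp)
  finally show ?thesis using a by simp
qed

lemma sum_sum_J2inv_J2: "b \<in> Ix n \<Longrightarrow> (\<Sum>q\<in>Ix n. (\<Sum>e\<in>Ix n. G e * J2inv n e q) * J2 n q b) = G b"
proof -
  assume b: "b \<in> Ix n"
  have "(\<Sum>q\<in>Ix n. (\<Sum>e\<in>Ix n. G e * J2inv n e q) * J2 n q b) = (\<Sum>e\<in>Ix n. G e * (\<Sum>q\<in>Ix n. J2inv n e q * J2 n q b))"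
    by (simp add: sum_distrib_left sum_distrib_right mult.assoc) (rule sum.swap)
  also have "\<dots> = (\<Sum>e\<in>Ix n. if e = b then G b else 0)"
    using b by (intro sum.cong refl) (simp only: sum_J2inv_J2[OF b], simp)
  finally show ?thesis using b by simp
qed

text \<open>\<open>(L\<^bsub>X\<^esub> \<omega>)\<^sub>b\<^sub>c\<close> for the constant 2-form \<open>\<omega>\<close>.\<close>
definition lie_deriv_omega :: "nat \<Rightarrow> vfield \<Rightarrow> tensor" where
  "lie_deriv_omega n X x b c = (\<Sum>a\<in>Ix n. pd b (\<lambda>y. X y a) x * J2inv n a c)
     + (\<Sum>a\<in>Ix n. J2inv n b a * pd c (\<lambda>y. X y a) x)"

lemma lie_deriv_J2_eq:
  assumes ab: "a \<in> Ix n" "b \<in> Ix n"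
  shows "lie_deriv n X (\<lambda>x. J2 n) x a b
       = - (\<Sum>p\<in>Ix n. J2 n a p * (\<Sum>q\<in>Ix n. lie_deriv_omega n X x p q * J2 n q b))"
proof -
  have "(\<Sum>p\<in>Ix n. J2 n a p * (\<Sum>q\<in>Ix n. lie_deriv_omega n X x p q * J2 n q b))
     = (\<Sum>p\<in>Ix n. J2 n a p * (\<Sum>q\<in>Ix n. (\<Sum>e\<in>Ix n. pd p (\<lambda>y. X y e) x * J2inv n e q) * J2 n q b))
     + (\<Sum>p\<in>Ix n. J2 n a p * (\<Sum>q\<in>Ix n. (\<Sum>e\<in>Ix n. J2inv n p e * pd q (\<lambda>y. X y e) x) * J2 n q b))"
    unfolding lie_deriv_omega_def by (simp add: sum.distrib ring_distribs)
  also have "(\<Sum>p\<in>Ix n. J2 n a p * (\<Sum>q\<in>Ix n. (\<Sum>e\<in>Ix n. pd p (\<lambda>y. X y e) x * J2inv n e q) * J2 n q b))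
     = (\<Sum>p\<in>Ix n. J2 n a p * pd p (\<lambda>y. X y b) x)"
    using sum_sum_J2inv_J2[OF ab(2)] by simp
  also have "(\<Sum>p\<in>Ix n. J2 n a p * (\<Sum>q\<in>Ix n. (\<Sum>e\<in>Ix n. J2inv n p e * pd q (\<lambda>y. X y e) x) * J2 n q b))
     = (\<Sum>q\<in>Ix n. (\<Sum>p\<in>Ix n. J2 n a p * (\<Sum>e\<in>Ix n. J2inv n p e * pd q (\<lambda>y. X y e) x)) * J2 n q b)"
    by (simp add: sum_distrib_left sum_distrib_right mult.assoc) (rule sum.swap)
  also have "\<dots> = (\<Sum>q\<in>Ix n. pd q (\<lambda>y. X y a) x * J2 n q b)"
    using sum_J2_sum_J2inv[OF ab(1)] by simp
  finally show ?thesis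
    unfolding lie_deriv_def vapp_def by (simp add: mult.commute)
qed

definition omegaR :: "nat \<Rightarrow> tensor \<Rightarrow> tensor" where
  "omegaR n R x a c = (\<Sum>e\<in>Ix n. J2inv n a e * R x e c)"

lemma pdiff_omegaR: "pdiff_tensor R \<Longrightarrow> pdiff (\<lambda>y. omegaR n R y e c)"
  unfolding omegaR_def pdiff_tensor_def by (simp add: pdiff_sum pdiff_cmult)

lemma pd_omegaR:
  "pdiff_tensor R \<Longrightarrow> pd d (\<lambda>y. omegaR n R y e c) x = (\<Sum>a\<in>Ix n. J2inv n e a * pd d (\<lambda>y. R y a c) x)"
  unfolding omegaR_def pdiff_tensor_def by (simp add: pd_sum pdiff_cmult pd_cmult)

locale omegaN_structure = homogeneous_nijenhuis +
  assumes omegaR_antisym: "\<And>x a c. a \<in> Ix n \<Longrightarrow> c \<in> Ix n \<Longrightarrow> omegaR n R x a c = - omegaR n R x c a"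
    and omegaR_closed: "\<And>x d e c. d \<in> Ix n \<Longrightarrow> e \<in> Ix n \<Longrightarrow> c \<in> Ix n \<Longrightarrow>
      pd d (\<lambda>y. omegaR n R y e c) x + pd e (\<lambda>y. omegaR n R y c d) x + pd c (\<lambda>y. omegaR n R y d e) x = 0"
begin

lemma sum_R_J2inv:
  assumes "a \<in> Ix n" "c \<in> Ix n"
  shows "(\<Sum>e\<in>Ix n. R x e a * J2inv n e c) = (\<Sum>e\<in>Ix n. J2inv n a e * R x e c)"
  using omegaR_antisym[OF assms(2,1), of x]
  by (subst J2inv_antisym) (simp add: omegaR_def sum_negf mult.commute)

lemma pd_omegaR_antisym:
  assumes "e \<in> Ix n" "c \<in> Ix n"
  shows "pd d (\<lambda>y. omegaR n R y e c) x = - pd d (\<lambda>y. omegaR n R y c e) x"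
proof -
  have "(\<lambda>y. omegaR n R y e c) = (\<lambda>y. - omegaR n R y c e)"
    using omegaR_antisym[OF assms] by simp
  then show ?thesis by (simp add: pd_minus pdiff_omegaR pdiff_R)
qed

text \<open>Conjugating \<open>\<omega> R = - R\<^sup>T \<omega>\<close> by \<open>J\<^sub>2\<close> gives \<open>R J\<^sub>2 = J\<^sub>2 R\<^sup>T\<close>.\<close>
lemma sum_R_J2:
  assumes a: "a \<in> Ix n" and d: "d \<in> Ix n"
  shows "(\<Sum>b\<in>Ix n. R x a b * J2 n b d) = (\<Sum>c\<in>Ix n. J2 n a c * R x d c)"
proof -
  define s where "s i = (if i \<le> n then i + n else i - n)" for i
  have sa: "s a \<in> Ix n" and sd: "s d \<in> Ix n" using a d by (auto simp: s_def)
  have "(\<Sum>e\<in>Ix n. J2 n (s a) e * R x e (s d)) = - (\<Sum>e\<in>Ix n. J2 n (s d) e * R x e (s a))"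
    using omegaR_antisym[OF sa sd, of x] by (simp add: omegaR_def J2inv_def sum_negf)
  then have "(if s a \<le> n then R x (s a + n) (s d) else - R x (s a - n) (s d))
      = - (if s d \<le> n then R x (s d + n) (s a) else - R x (s d - n) (s a))"
    by (simp only: sum_J2_mult[OF sa] sum_J2_mult[OF sd])
  then show ?thesis
    unfolding sum_J2_mult[OF a] sum_mult_J2[OF d] using a d by (simp add: s_def split: if_splits)
qed

end

context omegaN_structure
begin

lemma lie_deriv_omega_mvec:
  assumes X: "pdiff_vfield X" and bc: "b \<in> Ix n" "c \<in> Ix n"
  shows "lie_deriv_omega n (mvec n R X) x b c
       = (\<Sum>e\<in>Ix n. lie_deriv_omega n X x b e * R x e c)
         + (\<Sum>a\<in>Ix n. J2inv n b a * lie_deriv_endo n X R x a c)"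
proof -
  define C where "C e = (\<Sum>a\<in>Ix n. pd b (\<lambda>y. R y a e) x * J2inv n a c)
      + (\<Sum>a\<in>Ix n. J2inv n b a * pd c (\<lambda>y. R y a e) x)
      - (\<Sum>a\<in>Ix n. J2inv n b a * pd e (\<lambda>y. R y a c) x)" for e
  have C: "C e = 0" if e: "e \<in> Ix n" for e
  proof -
    have "(\<Sum>a\<in>Ix n. pd b (\<lambda>y. R y a e) x * J2inv n a c) = - pd b (\<lambda>y. omegaR n R y c e) x"
      by (subst J2inv_antisym) (simp add: pd_omegaR pdiff_R sum_negf mult.commute)
    then show ?thesis
      unfolding C_def using omegaR_closed[OF e bc, of x] pd_omegaR_antisym[OF bc(1) e, of c x]
      by (simp add: pd_omegaR[OF pdiff_R])
  qed
  have S: "(\<Sum>a\<in>Ix n. R x a e * J2inv n a c) - (\<Sum>a\<in>Ix n. J2inv n e a * R x a c) = 0"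
    if "e \<in> Ix n" for e
    using sum_R_J2inv[OF that bc(2)] by simp
  have "lie_deriv_omega n (mvec n R X) x b c - ((\<Sum>e\<in>Ix n. lie_deriv_omega n X x b e * R x e c)
      + (\<Sum>a\<in>Ix n. J2inv n b a * lie_deriv_endo n X R x a c))
     = (\<Sum>e\<in>Ix n. X x e * C e) + (\<Sum>e\<in>Ix n. pd b (\<lambda>y. X y e) x
         * ((\<Sum>a\<in>Ix n. R x a e * J2inv n a c) - (\<Sum>a\<in>Ix n. J2inv n e a * R x a c)))"
    unfolding lie_deriv_omega_def
    apply (simp only: pd_mvec[OF pdiff_R X])
    unfolding lie_deriv_endo_def vapp_def C_def
    apply (simp only: sum_distrib_left sum_distrib_right ring_distribs sum.distrib sum_subtractf
        sum_negf right_diff_distrib)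
    apply (simp only: sum.distrib[symmetric] sum_subtractf[symmetric])
    apply (rule sum_sum_eq_symmetrised)
    apply (simp add: algebra_simps)
    done
  also have "\<dots> = 0" using C S by simp
  finally show ?thesis by simp
qed

lemma lie_deriv_omega_msym:
  "b \<in> Ix n \<Longrightarrow> c \<in> Ix n \<Longrightarrow>
   lie_deriv_omega n (msym i) x b c = real i * (\<Sum>a\<in>Ix n. J2inv n b a * mpow n R i x a c)"
proof (induction i arbitrary: b c)
  case 0
  then show ?case by (simp add: lie_deriv_omega_def msym_def pd_X0)
next
  case (Suc i)
  have "lie_deriv_omega n (msym (Suc i)) x b c
      = (\<Sum>e\<in>Ix n. lie_deriv_omega n (msym i) x b e * R x e c)
        + (\<Sum>a\<in>Ix n. J2inv n b a * lie_deriv_endo n (msym i) R x a c)"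
    unfolding msym_Suc using Suc.prems by (intro lie_deriv_omega_mvec pdiff_vfield_msym)
  also have "(\<Sum>e\<in>Ix n. lie_deriv_omega n (msym i) x b e * R x e c)
      = (\<Sum>e\<in>Ix n. real i * (\<Sum>a\<in>Ix n. J2inv n b a * mpow n R i x a e) * R x e c)"
    using Suc by (intro sum.cong) auto
  also have "\<dots> = real i * (\<Sum>a\<in>Ix n. J2inv n b a * (\<Sum>e\<in>Ix n. mpow n R i x a e * R x e c))"
    by (simp add: sum_distrib_left sum_distrib_right mult.assoc) (rule sum.swap)
  also have "(\<Sum>a\<in>Ix n. J2inv n b a * (\<Sum>e\<in>Ix n. mpow n R i x a e * R x e c))
      = (\<Sum>a\<in>Ix n. J2inv n b a * mpow n R (Suc i) x a c)"
    using mpow_Suc_right[OF _ Suc.prems(2)] unfolding mmul_def by (intro sum.cong refl) simp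
  also have "(\<Sum>a\<in>Ix n. J2inv n b a * lie_deriv_endo n (msym i) R x a c)
      = (\<Sum>a\<in>Ix n. J2inv n b a * mpow n R (Suc i) x a c)"
    using Suc.prems by (auto intro!: sum.cong simp: lie_deriv_endo_msym_R)
  finally show ?case by (simp add: algebra_simps)
qed

lemma lie_deriv_J2_msym:
  assumes a: "a \<in> Ix n" and b: "b \<in> Ix n"
  shows "lie_deriv n (msym i) (\<lambda>x. J2 n) x a b = - real i * mmul n (mpow n R i) (\<lambda>x. J2 n) x a b"
proof -
  have "(\<Sum>p\<in>Ix n. J2 n a p * (\<Sum>q\<in>Ix n. lie_deriv_omega n (msym i) x p q * J2 n q b))
     = (\<Sum>p\<in>Ix n. J2 n a p * (\<Sum>q\<in>Ix n. (real i * (\<Sum>e\<in>Ix n. J2inv n p e * mpow n R i x e q)) * J2 n q b))"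
    by (intro sum.cong refl) (simp add: lie_deriv_omega_msym)
  also have "\<dots> = real i * (\<Sum>q\<in>Ix n. (\<Sum>p\<in>Ix n. J2 n a p * (\<Sum>e\<in>Ix n. J2inv n p e * mpow n R i x e q)) * J2 n q b)"
    by (simp add: sum_distrib_left sum_distrib_right mult.assoc mult.left_commute) (rule sum.swap)
  also have "\<dots> = real i * mmul n (mpow n R i) (\<lambda>x. J2 n) x a b"
    unfolding mmul_def
    by (intro arg_cong[where f="\<lambda>t. real i * t"] sum.cong refl)
      (simp only: sum_J2_sum_J2inv[OF a, of "\<lambda>e. mpow n R i x e _"])
  finally show ?thesis by (simp add: lie_deriv_J2_eq[OF a b])
qed

lemma lie_deriv_msym_J:
  assumes j: "2 \<le> j" and a: "a \<in> Ix n" and b: "b \<in> Ix n"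
  shows "lie_deriv n (msym i) (mmul n (mpow n R (j - 2)) (\<lambda>x. J2 n)) x a b
       = (real j - real i - 2) * mmul n (mpow n R (i + j - 2)) (\<lambda>x. J2 n) x a b"
proof -
  have "lie_deriv n (msym i) (mmul n (mpow n R (j - 2)) (\<lambda>x. J2 n)) x a b
     = mmul n (lie_deriv_endo n (msym i) (mpow n R (j - 2))) (\<lambda>x. J2 n) x a b
       + mmul n (mpow n R (j - 2)) (lie_deriv n (msym i) (\<lambda>x. J2 n)) x a b"
    by (rule lie_deriv_mmul[OF pdiff_tensor_mpow_R pdiff_tensor_const])
  also have "mmul n (lie_deriv_endo n (msym i) (mpow n R (j - 2))) (\<lambda>x. J2 n) x a b
      = real (j - 2) * mmul n (mpow n R (i + j - 2)) (\<lambda>x. J2 n) x a b"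
  proof -
    have "mmul n (lie_deriv_endo n (msym i) (mpow n R (j - 2))) (\<lambda>x. J2 n) x a b
        = mmul n (\<lambda>x a b. real (j - 2) * mpow n R (i + (j - 2)) x a b) (\<lambda>x. J2 n) x a b"
      using a by (intro mmul_cong_left) (simp add: lie_deriv_endo_msym_mpow)
    then show ?thesis using j by (simp add: mmul_scale_left)
  qed
  also have "mmul n (mpow n R (j - 2)) (lie_deriv n (msym i) (\<lambda>x. J2 n)) x a b
      = - real i * mmul n (mpow n R (j - 2)) (mmul n (mpow n R i) (\<lambda>x. J2 n)) x a b"
  proof -
    have "mmul n (mpow n R (j - 2)) (lie_deriv n (msym i) (\<lambda>x. J2 n)) x a b
        = mmul n (mpow n R (j - 2)) (\<lambda>x a b. - real i * mmul n (mpow n R i) (\<lambda>x. J2 n) x a b) x a b"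
      using b by (intro mmul_cong_right) (simp add: lie_deriv_J2_msym)
    then show ?thesis by (simp only: mmul_scale_right)
  qed
  also have "mmul n (mpow n R (j - 2)) (mmul n (mpow n R i) (\<lambda>x. J2 n)) x a b
      = mmul n (mpow n R (i + j - 2)) (\<lambda>x. J2 n) x a b"
    unfolding mmul_assoc[symmetric] using j mpow_add[OF a, of R "j - 2" i]
    by (simp add: mmul_def add.commute)
  finally show ?thesis using j by (simp add: algebra_simps of_nat_diff)
qed

lemma funpow_mvec_ham_vf:
  "a \<in> Ix n \<Longrightarrow>
   ((mvec n R ^^ m) (ham_vf n (\<lambda>x. J2 n) (ham 1))) x a = ham_vf n (\<lambda>x. J2 n) (ham (Suc m)) x a"
proof (induction m arbitrary: a)
  case (Suc m)
  have "((mvec n R ^^ Suc m) (ham_vf n (\<lambda>x. J2 n) (ham 1))) x a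
      = mvec n R ((mvec n R ^^ m) (ham_vf n (\<lambda>x. J2 n) (ham 1))) x a"
    by simp
  also have "\<dots> = mvec n R (ham_vf n (\<lambda>x. J2 n) (ham (Suc m))) x a"
    using Suc.IH by (intro mvec_cong) auto
  also have "\<dots> = (\<Sum>b\<in>Ix n. R x a b * (\<Sum>c\<in>Ix n. J2 n b c * pd c (ham (Suc m)) x))"
    unfolding mvec_def ham_vf_def ..
  also have "\<dots> = (\<Sum>c\<in>Ix n. (\<Sum>b\<in>Ix n. R x a b * J2 n b c) * pd c (ham (Suc m)) x)"
    by (simp add: sum_distrib_left sum_distrib_right mult.assoc) (rule sum.swap)
  also have "\<dots> = (\<Sum>c\<in>Ix n. (\<Sum>d\<in>Ix n. J2 n a d * R x c d) * pd c (ham (Suc m)) x)"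
    by (intro sum.cong refl) (simp only: sum_R_J2[OF Suc.prems])
  also have "\<dots> = (\<Sum>d\<in>Ix n. J2 n a d * (\<Sum>c\<in>Ix n. R x c d * pd c (ham (Suc m)) x))"
    by (simp add: sum_distrib_left sum_distrib_right mult.assoc) (rule sum.swap)
  also have "\<dots> = ham_vf n (\<lambda>x. J2 n) (ham (Suc (Suc m))) x a"
    unfolding ham_vf_def mvec_def by (intro sum.cong refl) (simp add: pd_ham_Suc)
  finally show ?case .
qed (simp add: ham_vf_def)

end

section \<open>The Toda recursion operator\<close>

text \<open>The term \<open>k\<close> of \<open>h\<^sub>1\<close>, indexed by \<open>Inl m\<close> for \<open>exp p\<^sub>m\<close> and by \<open>Inr j\<close> for
  \<open>exp (q\<^sub>j\<^sub>+\<^sub>1 - q\<^sub>j)\<close>, contributes \<open>toda_exp k \<cdot> (toda_u k \<alpha>\<^sup>T + toda_w k \<beta>\<^sup>T)\<close> with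
  \<open>\<alpha> = toda_alpha k\<close>, \<open>\<beta> = toda_beta k\<close> to \<open>R\<close>; \<open>toda_grad k\<close> is the gradient of the exponent
  of \<open>toda_exp k\<close>. Vectors are functions on the indices \<open>1..2n\<close>: \<open>q_from n j\<close> and \<open>p_from n j\<close>
  are the indicators of \<open>q\<^sub>j, \<dots>, q\<^sub>n\<close> and of \<open>p\<^sub>j, \<dots>, p\<^sub>n\<close>.\<close>

definition unit_vec :: "nat \<Rightarrow> nat \<Rightarrow> real" where
  "unit_vec i d = (if d = i then 1 else 0)"

definition q_from :: "nat \<Rightarrow> nat \<Rightarrow> nat \<Rightarrow> real" where
  "q_from n j d = (if j \<le> d \<and> d \<le> n then 1 else 0)"

definition p_from :: "nat \<Rightarrow> nat \<Rightarrow> nat \<Rightarrow> real" where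
  "p_from n j d = (if n + j \<le> d \<and> d \<le> 2 * n then 1 else 0)"

fun toda_grad :: "nat \<Rightarrow> nat + nat \<Rightarrow> nat \<Rightarrow> real" where
  "toda_grad n (Inl m) d = unit_vec (n + m) d"
| "toda_grad n (Inr j) d = unit_vec (j + 1) d - unit_vec j d"

fun toda_u :: "nat \<Rightarrow> nat + nat \<Rightarrow> nat \<Rightarrow> real" where
  "toda_u n (Inl m) d = q_from n (m + 1) d + unit_vec (n + m) d"
| "toda_u n (Inr j) d = q_from n (j + 1) d + unit_vec (n + j) d"

fun toda_alpha :: "nat \<Rightarrow> nat + nat \<Rightarrow> nat \<Rightarrow> real" where
  "toda_alpha n (Inl m) d = - unit_vec (n + m) d"
| "toda_alpha n (Inr j) d = unit_vec (j + 1) d - unit_vec j d"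

fun toda_w :: "nat \<Rightarrow> nat + nat \<Rightarrow> nat \<Rightarrow> real" where
  "toda_w n (Inl m) d = unit_vec m d"
| "toda_w n (Inr j) d = unit_vec (n + j + 1) d - unit_vec (n + j) d"

fun toda_beta :: "nat \<Rightarrow> nat + nat \<Rightarrow> nat \<Rightarrow> real" where
  "toda_beta n (Inl m) d = - unit_vec m d + p_from n (m + 1) d"
| "toda_beta n (Inr j) d = - unit_vec j d + p_from n (j + 1) d"

fun toda_exp :: "nat \<Rightarrow> nat + nat \<Rightarrow> pt \<Rightarrow> real" where
  "toda_exp n (Inl m) x = exp (x (n + m))"
| "toda_exp n (Inr j) x = exp (x (j + 1) - x j)"

definition toda_coeff :: "nat \<Rightarrow> nat + nat \<Rightarrow> nat \<Rightarrow> nat \<Rightarrow> real" where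
  "toda_coeff n k a b = toda_u n k a * toda_alpha n k b + toda_w n k a * toda_beta n k b"

definition toda_terms :: "nat \<Rightarrow> (nat + nat) set" where
  "toda_terms n = Inl ` {1..n} \<union> Inr ` {1..<n}"

definition dot :: "nat \<Rightarrow> (nat \<Rightarrow> real) \<Rightarrow> (nat \<Rightarrow> real) \<Rightarrow> real" where
  "dot n v w = (\<Sum>d\<in>Ix n. v d * w d)"

lemma dot_unit_vec_left: "dot n (unit_vec i) v = (if 1 \<le> i \<and> i \<le> 2 * n then v i else 0)"
proof -
  have "dot n (unit_vec i) v = (\<Sum>d\<in>Ix n. if d = i then v i else 0)"
    unfolding dot_def unit_vec_def by (intro sum.cong) auto
  then show ?thesis by simp
qed

lemma dot_add_left: "dot n (\<lambda>d. f d + g d) v = dot n f v + dot n g v"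
  unfolding dot_def by (simp add: ring_distribs sum.distrib)
lemma dot_diff_left: "dot n (\<lambda>d. f d - g d) v = dot n f v - dot n g v"
  unfolding dot_def by (simp add: ring_distribs sum_subtractf)
lemma dot_minus_left: "dot n (\<lambda>d. - f d) v = - dot n f v"
  unfolding dot_def by (simp add: sum_negf)
lemma dot_add_right: "dot n v (\<lambda>d. f d + g d) = dot n v f + dot n v g"
  unfolding dot_def by (simp add: ring_distribs sum.distrib)
lemma dot_diff_right: "dot n v (\<lambda>d. f d - g d) = dot n v f - dot n v g"
  unfolding dot_def by (simp add: ring_distribs sum_subtractf)
lemma dot_commute: "dot n v w = dot n w v"
  unfolding dot_def by (simp add: mult.commute)
lemma dot_p_from_q_from: "dot n (p_from n (Suc j)) (q_from n k) = 0"
  unfolding dot_def p_from_def q_from_def by (intro sum.neutral) auto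

lemma dot_unit_vec_right: "dot n v (unit_vec i) = (if 1 \<le> i \<and> i \<le> 2 * n then v i else 0)"
  by (subst dot_commute) (rule dot_unit_vec_left)

lemmas dot_simps = dot_add_left dot_diff_left dot_minus_left dot_add_right dot_diff_right

lemma toda_fun_simps:
  "toda_grad n (Inl m) = unit_vec (n + m)"
  "toda_grad n (Inr j) = (\<lambda>d. unit_vec (j + 1) d - unit_vec j d)"
  "toda_u n (Inl m) = (\<lambda>d. q_from n (m + 1) d + unit_vec (n + m) d)"
  "toda_u n (Inr j) = (\<lambda>d. q_from n (j + 1) d + unit_vec (n + j) d)"
  "toda_alpha n (Inl m) = (\<lambda>d. - unit_vec (n + m) d)"
  "toda_alpha n (Inr j) = (\<lambda>d. unit_vec (j + 1) d - unit_vec j d)"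
  "toda_w n (Inl m) = unit_vec m"
  "toda_w n (Inr j) = (\<lambda>d. unit_vec (n + j + 1) d - unit_vec (n + j) d)"
  "toda_beta n (Inl m) = (\<lambda>d. - unit_vec m d + p_from n (m + 1) d)"
  "toda_beta n (Inr j) = (\<lambda>d. - unit_vec j d + p_from n (j + 1) d)"
  by (auto simp: fun_eq_iff)

lemma dot_toda_Inl_Inl:
  assumes "a \<in> {1..n}" "b \<in> {1..n}"
  shows "dot n (toda_grad n (Inl b)) (toda_u n (Inl a)) = (if a = b then 1 else 0)"
    and "dot n (toda_grad n (Inl b)) (toda_w n (Inl a)) = 0"
    and "dot n (toda_alpha n (Inl a)) (toda_u n (Inl b)) = - (if a = b then 1 else 0)"
    and "dot n (toda_alpha n (Inl a)) (toda_w n (Inl b)) = 0"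
    and "dot n (toda_beta n (Inl a)) (toda_u n (Inl b)) = - (if b + 1 \<le> a then 1 else 0) + (if a + 1 \<le> b then 1 else 0)"
    and "dot n (toda_beta n (Inl a)) (toda_w n (Inl b)) = - (if a = b then 1 else 0)"
  using assms
  by (simp_all only: toda_fun_simps dot_simps dot_unit_vec_left dot_unit_vec_right
      Suc_eq_plus1[symmetric] dot_p_from_q_from)
    (auto simp: unit_vec_def q_from_def p_from_def)

lemma dot_toda_Inr_Inr:
  assumes "a \<in> {1..<n}" "b \<in> {1..<n}"
  shows "dot n (toda_grad n (Inr b)) (toda_u n (Inr a)) = (if a = b then 1 else 0)"
    and "dot n (toda_grad n (Inr b)) (toda_w n (Inr a)) = 0"
    and "dot n (toda_alpha n (Inr a)) (toda_u n (Inr b)) = (if a = b then 1 else 0)"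
    and "dot n (toda_alpha n (Inr a)) (toda_w n (Inr b)) = 0"
    and "dot n (toda_beta n (Inr a)) (toda_u n (Inr b)) = - (if b + 1 \<le> a then 1 else 0) + (if a + 1 \<le> b then 1 else 0)"
    and "dot n (toda_beta n (Inr a)) (toda_w n (Inr b)) = (if a = b then 1 else 0)"
  using assms
  by (simp_all only: toda_fun_simps dot_simps dot_unit_vec_left dot_unit_vec_right
      Suc_eq_plus1[symmetric] dot_p_from_q_from)
    (auto simp: unit_vec_def q_from_def p_from_def)

lemma dot_toda_Inl_Inr:
  assumes "a \<in> {1..n}" "b \<in> {1..<n}"
  shows "dot n (toda_grad n (Inr b)) (toda_u n (Inl a)) = (if b = a then 1 else 0)"
    and "dot n (toda_grad n (Inr b)) (toda_w n (Inl a)) = (if a = b + 1 then 1 else 0) - (if a = b then 1 else 0)"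
    and "dot n (toda_alpha n (Inl a)) (toda_u n (Inr b)) = - (if a = b then 1 else 0)"
    and "dot n (toda_alpha n (Inl a)) (toda_w n (Inr b)) = - ((if a = b + 1 then 1 else 0) - (if a = b then 1 else 0))"
    and "dot n (toda_beta n (Inl a)) (toda_u n (Inr b)) = - (if b + 1 \<le> a then 1 else 0) + (if a + 1 \<le> b then 1 else 0)"
    and "dot n (toda_beta n (Inl a)) (toda_w n (Inr b)) = (if b = a then 1 else 0)"
  using assms
  by (simp_all only: toda_fun_simps dot_simps dot_unit_vec_left dot_unit_vec_right
      Suc_eq_plus1[symmetric] dot_p_from_q_from)
    (auto simp: unit_vec_def q_from_def p_from_def)

lemma dot_toda_Inr_Inl:
  assumes "a \<in> {1..<n}" "b \<in> {1..n}"
  shows "dot n (toda_grad n (Inl b)) (toda_u n (Inr a)) = (if b = a then 1 else 0)"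
    and "dot n (toda_grad n (Inl b)) (toda_w n (Inr a)) = (if b = a + 1 then 1 else 0) - (if b = a then 1 else 0)"
    and "dot n (toda_alpha n (Inr a)) (toda_u n (Inl b)) = (if a = b then 1 else 0)"
    and "dot n (toda_alpha n (Inr a)) (toda_w n (Inl b)) = (if b = a + 1 then 1 else 0) - (if b = a then 1 else 0)"
    and "dot n (toda_beta n (Inr a)) (toda_u n (Inl b)) = - (if b + 1 \<le> a then 1 else 0) + (if a + 1 \<le> b then 1 else 0)"
    and "dot n (toda_beta n (Inr a)) (toda_w n (Inl b)) = - (if a = b then 1 else 0)"
  using assms
  by (simp_all only: toda_fun_simps dot_simps dot_unit_vec_left dot_unit_vec_right
      Suc_eq_plus1[symmetric] dot_p_from_q_from)
    (auto simp: unit_vec_def q_from_def p_from_def)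

lemma Rop_eq_J3: "b \<in> Ix n \<Longrightarrow> Rop n x a b = (if b \<le> n then J3 n x a (b + n) else - J3 n x a (b - n))"
proof -
  assume b: "b \<in> Ix n"
  have "Rop n x a b = - (\<Sum>c\<in>Ix n. J3 n x a c * J2 n c b)"
    unfolding Rop_def mmul_def J2inv_def by (simp add: sum_negf[symmetric])
  also have "\<dots> = (if b \<le> n then J3 n x a (b + n) else - J3 n x a (b - n))"
    using sum_mult_J2[OF b, of "\<lambda>c. J3 n x a c"] by simp
  finally show ?thesis .
qed

lemma sum_toda_terms: "(\<Sum>k\<in>toda_terms n. F k) = (\<Sum>m\<in>{1..n}. F (Inl m)) + (\<Sum>j\<in>{1..<n}. F (Inr j))"
  unfolding toda_terms_def
  by (subst sum.union_disjoint) (auto simp: sum.reindex)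

lemma sum_if_add_eq:
  fixes c t :: nat
  assumes A: "finite A"
  shows "(\<Sum>j\<in>A. if c + j = t then h j else 0) = (if c \<le> t \<and> t - c \<in> A then h (t - c) else (0::real))"
proof -
  have pt: "(if c + j = t then y else 0) = (if j = t - c then (if c \<le> t then y else 0) else (0::real))"
    for j :: nat and y
    by (cases "c + j = t") auto
  have "(\<Sum>j\<in>A. if c + j = t then h j else 0) = (\<Sum>j\<in>A. if j = t - c then (if c \<le> t then h j else 0) else 0)"
    by (simp only: pt)
  also have "\<dots> = (if c \<le> t \<and> t - c \<in> A then h (t - c) else 0)"
    using A by (simp add: sum.delta')
  finally show ?thesis .
qed

lemma sum_toda_Inl: "(\<Sum>m\<in>{1..n}. toda_exp n (Inl m) x * toda_coeff n (Inl m) a b) =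
   (if n \<le> b \<and> b - n \<in> {1..n} then - exp (x (n + (b - n))) * (q_from n (b - n + 1) a + unit_vec (n + (b - n)) a) else 0)
 + (if 0 \<le> a \<and> a - 0 \<in> {1..n} then exp (x (n + (a - 0))) * (- unit_vec (a - 0) b + p_from n (a - 0 + 1) b) else 0)"
  (is "_ = ?rhs")
proof -
  have "(\<Sum>m\<in>{1..n}. toda_exp n (Inl m) x * toda_coeff n (Inl m) a b) =
     (\<Sum>m\<in>{1..n}. (if n + m = b then - exp (x (n + m)) * (q_from n (m + 1) a + unit_vec (n + m) a) else 0)
        + (if 0 + m = a then exp (x (n + m)) * (- unit_vec m b + p_from n (m + 1) b) else 0))"
    by (intro sum.cong refl) (auto simp: toda_coeff_def unit_vec_def algebra_simps)
  also have "\<dots> = (\<Sum>m\<in>{1..n}. if n + m = b then - exp (x (n + m)) * (q_from n (m + 1) a + unit_vec (n + m) a) else 0)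
        + (\<Sum>m\<in>{1..n}. if 0 + m = a then exp (x (n + m)) * (- unit_vec m b + p_from n (m + 1) b) else 0)"
    by (rule sum.distrib)
  also have "\<dots> = ?rhs"
    by (simp only: sum_if_add_eq[OF finite_atLeastAtMost])
  finally show ?thesis .
qed

lemma sum_toda_Inr: "(\<Sum>j\<in>{1..<n}. toda_exp n (Inr j) x * toda_coeff n (Inr j) a b) =
     (if 1 \<le> b \<and> b - 1 \<in> {1..<n} then exp (x (b - 1 + 1) - x (b - 1)) * (q_from n (b - 1 + 1) a + unit_vec (n + (b - 1)) a) else 0)
   - (if 0 \<le> b \<and> b - 0 \<in> {1..<n} then exp (x (b - 0 + 1) - x (b - 0)) * (q_from n (b - 0 + 1) a + unit_vec (n + (b - 0)) a) else 0)
   + (if n + 1 \<le> a \<and> a - (n + 1) \<in> {1..<n} then exp (x (a - (n + 1) + 1) - x (a - (n + 1))) * (- unit_vec (a - (n + 1)) b + p_from n (a - (n + 1) + 1) b) else 0)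
   - (if n \<le> a \<and> a - n \<in> {1..<n} then exp (x (a - n + 1) - x (a - n)) * (- unit_vec (a - n) b + p_from n (a - n + 1) b) else 0)"
  (is "_ = ?rhs")
proof -
  let ?U = "\<lambda>j. exp (x (j + 1) - x j) * (q_from n (j + 1) a + unit_vec (n + j) a)"
  let ?V = "\<lambda>j. exp (x (j + 1) - x j) * (- unit_vec j b + p_from n (j + 1) b)"
  have "(\<Sum>j\<in>{1..<n}. toda_exp n (Inr j) x * toda_coeff n (Inr j) a b) =
     (\<Sum>j\<in>{1..<n}. ((if 1 + j = b then ?U j else 0) - (if 0 + j = b then ?U j else 0))
        + ((if (n + 1) + j = a then ?V j else 0) - (if n + j = a then ?V j else 0)))"
    by (intro sum.cong refl) (auto simp: toda_coeff_def unit_vec_def algebra_simps)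
  also have "\<dots> = ((\<Sum>j\<in>{1..<n}. if 1 + j = b then ?U j else 0) - (\<Sum>j\<in>{1..<n}. if 0 + j = b then ?U j else 0))
        + ((\<Sum>j\<in>{1..<n}. if (n + 1) + j = a then ?V j else 0) - (\<Sum>j\<in>{1..<n}. if n + j = a then ?V j else 0))"
    by (simp only: sum.distrib sum_subtractf)
  also have "\<dots> = ?rhs"
    by (simp only: sum_if_add_eq[OF finite_atLeastLessThan])
  finally show ?thesis .
qed

lemma Rop_q_q:
  assumes "1 \<le> a" "a \<le> n" "1 \<le> b" "b \<le> n"
  shows "Rop n x a b = (if a = b then - exp (x (n + a)) + eqd n a x else 0) + (if b < a then eqd n b x - eqd n (b + 1) x else 0)"
  using assms by (auto simp: Rop_eq_J3 J3_def J3_base_def)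

lemma Rop_q_p:
  assumes "1 \<le> a" "a \<le> n" "1 \<le> b" "b \<le> n"
  shows "Rop n x a (n + b) = (if a < b then exp (x (n + a)) else 0) - (if b < a then exp (x (n + b)) else 0)"
  using assms by (auto simp: Rop_eq_J3 J3_def J3_base_def)

lemma Rop_p_q:
  assumes "1 \<le> a" "a \<le> n" "1 \<le> b" "b \<le> n"
  shows "Rop n x (n + a) b = (if b = a + 1 then exp (x b - x a) else 0) - (if a = b + 1 then exp (x a - x b) else 0)"
  using assms by (auto simp: Rop_eq_J3 J3_def J3_base_def eqd_def)

lemma Rop_p_p:
  assumes "1 \<le> a" "a \<le> n" "1 \<le> b" "b \<le> n"
  shows "Rop n x (n + a) (n + b) = (if a = b then - exp (x (n + a)) + eqd n a x else 0) + (if a < b then eqd n a x - eqd n (a + 1) x else 0)"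
  using assms by (auto simp: Rop_eq_J3 J3_def J3_base_def)

lemma toda_sum_q_q:
  assumes "1 \<le> a" "a \<le> n" "1 \<le> b" "b \<le> n"
  shows "(\<Sum>k\<in>toda_terms n. toda_exp n k x * toda_coeff n k a b) = (if a = b then - exp (x (n + a)) + eqd n a x else 0) + (if b < a then eqd n b x - eqd n (b + 1) x else 0)"
proof -
  have "a < b \<or> a = b \<or> b < a" by auto
  then show ?thesis
    using assms
    by (elim disjE) (simp_all only: sum_toda_terms sum_toda_Inl sum_toda_Inr,
        (simp_all add: unit_vec_def q_from_def p_from_def eqd_def split del: if_split cong: if_cong), auto)
qed

lemma toda_sum_q_p:
  assumes "1 \<le> a" "a \<le> n" "1 \<le> b" "b \<le> n"
  shows "(\<Sum>k\<in>toda_terms n. toda_exp n k x * toda_coeff n k a (n + b)) = (if a < b then exp (x (n + a)) else 0) - (if b < a then exp (x (n + b)) else 0)"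
proof -
  have "a < b \<or> a = b \<or> b < a" by auto
  then show ?thesis
    using assms
    by (elim disjE) (simp_all only: sum_toda_terms sum_toda_Inl sum_toda_Inr,
        (simp_all add: unit_vec_def q_from_def p_from_def eqd_def split del: if_split cong: if_cong), auto)
qed

lemma toda_sum_p_q:
  assumes "1 \<le> a" "a \<le> n" "1 \<le> b" "b \<le> n"
  shows "(\<Sum>k\<in>toda_terms n. toda_exp n k x * toda_coeff n k (n + a) b) = (if b = a + 1 then exp (x b - x a) else 0) - (if a = b + 1 then exp (x a - x b) else 0)"
proof -
  have "b = a + 1 \<or> a = b + 1 \<or> a = b \<or> (b \<noteq> a + 1 \<and> a \<noteq> b + 1 \<and> a \<noteq> b)" by auto
  then show ?thesis
    using assms
    by (elim disjE) (simp_all only: sum_toda_terms sum_toda_Inl sum_toda_Inr,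
        (simp_all add: unit_vec_def q_from_def p_from_def eqd_def split del: if_split cong: if_cong), auto)
qed

lemma toda_sum_p_p:
  assumes "1 \<le> a" "a \<le> n" "1 \<le> b" "b \<le> n"
  shows "(\<Sum>k\<in>toda_terms n. toda_exp n k x * toda_coeff n k (n + a) (n + b)) = (if a = b then - exp (x (n + a)) + eqd n a x else 0) + (if a < b then eqd n a x - eqd n (a + 1) x else 0)"
proof -
  have "a < b \<or> a = b \<or> b < a" by auto
  then show ?thesis
    using assms
    by (elim disjE) (simp_all only: sum_toda_terms sum_toda_Inl sum_toda_Inr,
        (simp_all add: unit_vec_def q_from_def p_from_def eqd_def split del: if_split cong: if_cong), auto)
qed

lemma Rop_eq_toda_sum:
  assumes a: "a \<in> Ix n" and b: "b \<in> Ix n"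
  shows "Rop n x a b = (\<Sum>k\<in>toda_terms n. toda_exp n k x * toda_coeff n k a b)"
proof -
  have A: "(1 \<le> a \<and> a \<le> n) \<or> (\<exists>a'. a = n + a' \<and> 1 \<le> a' \<and> a' \<le> n)"
    using a by (cases "a \<le> n") (auto intro: exI[of _ "a - n"])
  have B: "(1 \<le> b \<and> b \<le> n) \<or> (\<exists>b'. b = n + b' \<and> 1 \<le> b' \<and> b' \<le> n)"
    using b by (cases "b \<le> n") (auto intro: exI[of _ "b - n"])
  from A B show ?thesis
    by (elim disjE exE conjE)
      (simp_all only: Rop_q_q toda_sum_q_q Rop_q_p toda_sum_q_p Rop_p_q toda_sum_p_q Rop_p_p toda_sum_p_p)
qed

definition torsion_term :: "nat \<Rightarrow> nat + nat \<Rightarrow> nat + nat \<Rightarrow> nat \<Rightarrow> nat \<Rightarrow> nat \<Rightarrow> real" where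
  "torsion_term n k l a b c =
     (\<Sum>d\<in>Ix n. toda_coeff n k d b * toda_grad n l d) * toda_coeff n l a c
     - (\<Sum>d\<in>Ix n. toda_coeff n k d c * toda_grad n l d) * toda_coeff n l a b
     - (\<Sum>d\<in>Ix n. toda_coeff n k a d * (toda_grad n l b * toda_coeff n l d c - toda_grad n l c * toda_coeff n l d b))"

lemma sum_toda_coeff_toda_grad: "(\<Sum>d\<in>Ix n. toda_coeff n k d b * toda_grad n l d) = dot n (toda_grad n l) (toda_u n k) * toda_alpha n k b + dot n (toda_grad n l) (toda_w n k) * toda_beta n k b"
  unfolding toda_coeff_def dot_def by (simp add: sum.distrib sum_distrib_left sum_distrib_right algebra_simps)

lemma sum_toda_coeff_toda_coeff: "(\<Sum>d\<in>Ix n. toda_coeff n k a d * toda_coeff n l d c) =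
   toda_u n k a * (dot n (toda_alpha n k) (toda_u n l) * toda_alpha n l c + dot n (toda_alpha n k) (toda_w n l) * toda_beta n l c)
 + toda_w n k a * (dot n (toda_beta n k) (toda_u n l) * toda_alpha n l c + dot n (toda_beta n k) (toda_w n l) * toda_beta n l c)"
  unfolding toda_coeff_def dot_def by (simp add: sum.distrib sum_distrib_left sum_distrib_right algebra_simps)

lemma torsion_term_expand: "torsion_term n k l a b c =
   (dot n (toda_grad n l) (toda_u n k) * toda_alpha n k b + dot n (toda_grad n l) (toda_w n k) * toda_beta n k b) * toda_coeff n l a c
 - (dot n (toda_grad n l) (toda_u n k) * toda_alpha n k c + dot n (toda_grad n l) (toda_w n k) * toda_beta n k c) * toda_coeff n l a b
 - (toda_grad n l b * (toda_u n k a * (dot n (toda_alpha n k) (toda_u n l) * toda_alpha n l c + dot n (toda_alpha n k) (toda_w n l) * toda_beta n l c)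
        + toda_w n k a * (dot n (toda_beta n k) (toda_u n l) * toda_alpha n l c + dot n (toda_beta n k) (toda_w n l) * toda_beta n l c))
  - toda_grad n l c * (toda_u n k a * (dot n (toda_alpha n k) (toda_u n l) * toda_alpha n l b + dot n (toda_alpha n k) (toda_w n l) * toda_beta n l b)
        + toda_w n k a * (dot n (toda_beta n k) (toda_u n l) * toda_alpha n l b + dot n (toda_beta n k) (toda_w n l) * toda_beta n l b)))"
proof -
  have "(\<Sum>d\<in>Ix n. toda_coeff n k a d * (toda_grad n l b * toda_coeff n l d c - toda_grad n l c * toda_coeff n l d b))
     = toda_grad n l b * (\<Sum>d\<in>Ix n. toda_coeff n k a d * toda_coeff n l d c) - toda_grad n l c * (\<Sum>d\<in>Ix n. toda_coeff n k a d * toda_coeff n l d b)"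
    by (simp add: sum_distrib_left sum_subtractf algebra_simps)
  then show ?thesis unfolding torsion_term_def by (simp only: sum_toda_coeff_toda_grad sum_toda_coeff_toda_coeff)
qed

lemma toda_alpha_Inl: "toda_alpha n (Inl m) d = - toda_grad n (Inl m) d" by simp
lemma toda_alpha_Inr: "toda_alpha n (Inr j) d = toda_grad n (Inr j) d" by simp
lemma toda_u_Inr: "toda_u n (Inr j) d = toda_u n (Inl j) d" by simp
lemma toda_beta_Inr: "toda_beta n (Inr j) d = toda_beta n (Inl j) d" by simp
lemma toda_u_Inr_Suc: "j < n \<Longrightarrow> toda_u n (Inr j) d = toda_u n (Inl (j + 1)) d + toda_w n (Inl (j + 1)) d - toda_w n (Inr j) d"
  by (auto simp: unit_vec_def q_from_def)
lemma toda_beta_Inr_Suc: "j < n \<Longrightarrow> toda_beta n (Inr j) d = toda_beta n (Inl (j + 1)) d + toda_grad n (Inl (j + 1)) d + toda_grad n (Inr j) d"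
  by (auto simp: unit_vec_def p_from_def)

lemmas toda_simps = toda_grad.simps toda_u.simps toda_alpha.simps toda_w.simps toda_beta.simps

lemma torsion_term_antisym_Inl_Inl: assumes "m \<in> {1..n}" "m2 \<in> {1..n}"
  shows "torsion_term n (Inl m) (Inl m2) a b c + torsion_term n (Inl m2) (Inl m) a b c = 0"
proof -
  have "m < m2 \<or> m = m2 \<or> m2 < m" by auto
  then show ?thesis
    using assms
    by (elim disjE)
       (simp_all only: torsion_term_expand dot_toda_Inl_Inl toda_alpha_Inl toda_coeff_def,
        simp_all add: algebra_simps del: toda_simps)
qed

lemma torsion_term_antisym_Inr_Inr: assumes "j \<in> {1..<n}" "j2 \<in> {1..<n}"
  shows "torsion_term n (Inr j) (Inr j2) a b c + torsion_term n (Inr j2) (Inr j) a b c = 0"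
proof -
  have "j < j2 \<or> j = j2 \<or> j2 < j" by auto
  then show ?thesis
    using assms
    by (elim disjE)
       (simp_all only: torsion_term_expand dot_toda_Inr_Inr toda_alpha_Inr toda_coeff_def,
        simp_all add: algebra_simps del: toda_simps)
qed

lemma torsion_term_antisym_Inl_Inr: assumes m: "m \<in> {1..n}" and j: "j \<in> {1..<n}"
  shows "torsion_term n (Inl m) (Inr j) a b c + torsion_term n (Inr j) (Inl m) a b c = 0"
proof -
  have jn: "j < n" using j by simp
  have "j = m \<or> j + 1 = m \<or> j + 1 < m \<or> m < j" by auto
  then show ?thesis
  proof (elim disjE)
    assume "j = m"
    then show ?thesis using m j
      by (simp only: torsion_term_expand dot_toda_Inl_Inr dot_toda_Inr_Inl toda_alpha_Inl toda_alpha_Inr toda_coeff_def toda_u_Inr toda_beta_Inr)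
         (simp add: algebra_simps del: toda_simps)
  next
    assume "j + 1 = m"
    then show ?thesis using m j jn
      by (simp only: torsion_term_expand dot_toda_Inl_Inr dot_toda_Inr_Inl toda_alpha_Inl toda_alpha_Inr toda_coeff_def)
         (simp add: algebra_simps toda_u_Inr_Suc toda_beta_Inr_Suc del: toda_simps)
  next
    assume "j + 1 < m"
    then show ?thesis using m j
      by (simp only: torsion_term_expand dot_toda_Inl_Inr dot_toda_Inr_Inl toda_alpha_Inl toda_alpha_Inr toda_coeff_def)
         (simp add: algebra_simps del: toda_simps)
  next
    assume "m < j"
    then show ?thesis using m j
      by (simp only: torsion_term_expand dot_toda_Inl_Inr dot_toda_Inr_Inl toda_alpha_Inl toda_alpha_Inr toda_coeff_def)
         (simp add: algebra_simps del: toda_simps)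
  qed
qed

lemma torsion_term_antisym: assumes "k \<in> toda_terms n" "l \<in> toda_terms n"
  shows "torsion_term n k l a b c + torsion_term n l k a b c = 0"
  using assms unfolding toda_terms_def
  by (auto simp: torsion_term_antisym_Inl_Inl torsion_term_antisym_Inr_Inr torsion_term_antisym_Inl_Inr add.commute[of "torsion_term n (Inr _) (Inl _) a b c"] simp del: toda_simps)

lemma pdiff_pd_toda_exp: "pdiff (toda_exp n k) \<and> pd d (toda_exp n k) x = toda_grad n k d * toda_exp n k x"
proof (cases k)
  case (Inl m)
  have e: "toda_exp n k = (\<lambda>y. exp (y (n + m)))" using Inl by (auto simp: fun_eq_iff)
  show ?thesis unfolding e using Inl by (auto simp: pdiff_exp pd_exp pd_coord unit_vec_def)
next
  case (Inr j)
  have e: "toda_exp n k = (\<lambda>y. exp (y (j + 1) - y j))" using Inr by (auto simp: fun_eq_iff)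
  have s: "pdiff (\<lambda>y. y (j + 1) - y j)" by (intro pdiff_diff pdiff_coord)
  show ?thesis unfolding e using Inr s by (auto simp: pdiff_exp pd_exp pd_diff pd_coord unit_vec_def)
qed

lemma pdiff_toda_exp: "pdiff (toda_exp n k)" using pdiff_pd_toda_exp by blast
lemma pd_toda_exp: "pd d (toda_exp n k) x = toda_grad n k d * toda_exp n k x" using pdiff_pd_toda_exp by blast

lemma Rop_fun_eq: "a \<in> Ix n \<Longrightarrow> b \<in> Ix n \<Longrightarrow> (\<lambda>y. Rop n y a b) = (\<lambda>y. \<Sum>k\<in>toda_terms n. toda_exp n k y * toda_coeff n k a b)"
  by (rule ext) (rule Rop_eq_toda_sum)

lemma pd_toda_sum: "pd d (\<lambda>y. \<Sum>k\<in>toda_terms n. toda_exp n k y * toda_coeff n k a b) x = (\<Sum>k\<in>toda_terms n. toda_grad n k d * toda_exp n k x * toda_coeff n k a b)"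
  by (simp add: pd_sum pdiff_multc pdiff_toda_exp pd_multc pd_toda_exp)

lemma pd_Rop: "a \<in> Ix n \<Longrightarrow> b \<in> Ix n \<Longrightarrow> pd d (\<lambda>y. Rop n y a b) x = (\<Sum>k\<in>toda_terms n. toda_grad n k d * toda_exp n k x * toda_coeff n k a b)"
  by (simp add: Rop_fun_eq pd_sum pdiff_multc pdiff_toda_exp pd_multc pd_toda_exp)

lemma pdiff_J3: "pdiff (\<lambda>y. J3 n y a b)"
  unfolding J3_def J3_base_def eqd_def
  by (intro pdiff_diff pdiff_if pdiff_exp pdiff_add pdiff_minus pdiff_coord pdiff_const)

lemma pdiff_tensor_Rop: "pdiff_tensor (Rop n)"
  unfolding pdiff_tensor_def Rop_def mmul_def by (intro allI pdiff_sum pdiff_multc pdiff_J3)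

lemma sum_mult_sum: "(\<Sum>d\<in>D. (\<Sum>k\<in>K. A k d) * (\<Sum>l\<in>K. B l d)) = (\<Sum>k\<in>K. \<Sum>l\<in>K. \<Sum>d\<in>D. A k d * B l d :: real)"
proof -
  have "(\<Sum>d\<in>D. (\<Sum>k\<in>K. A k d) * (\<Sum>l\<in>K. B l d)) = (\<Sum>d\<in>D. \<Sum>k\<in>K. \<Sum>l\<in>K. A k d * B l d)"
    by (simp add: sum_product)
  also have "\<dots> = (\<Sum>k\<in>K. \<Sum>d\<in>D. \<Sum>l\<in>K. A k d * B l d)" by (rule sum.swap)
  also have "\<dots> = (\<Sum>k\<in>K. \<Sum>l\<in>K. \<Sum>d\<in>D. A k d * B l d)" by (intro sum.cong refl) (rule sum.swap)
  finally show ?thesis .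
qed

lemma sum_Rop_mult_pd_Rop:
  assumes "p \<in> Ix n" "q \<in> Ix n" "r \<in> Ix n"
  shows "(\<Sum>d\<in>Ix n. Rop n x d q * pd d (\<lambda>y. Rop n y p r) x) =
    (\<Sum>k\<in>toda_terms n. \<Sum>l\<in>toda_terms n. \<Sum>d\<in>Ix n.
       (toda_exp n k x * toda_coeff n k d q) * (toda_grad n l d * toda_exp n l x * toda_coeff n l p r))"
proof -
  have "(\<Sum>d\<in>Ix n. Rop n x d q * pd d (\<lambda>y. Rop n y p r) x) = (\<Sum>d\<in>Ix n.
      (\<Sum>k\<in>toda_terms n. toda_exp n k x * toda_coeff n k d q)
      * (\<Sum>l\<in>toda_terms n. toda_grad n l d * toda_exp n l x * toda_coeff n l p r))"
    using assms by (intro sum.cong refl) (simp add: Rop_eq_toda_sum pd_toda_sum)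
  then show ?thesis by (simp only: sum_mult_sum)
qed

lemma sum_Rop_mult_pd_Rop':
  assumes "p \<in> Ix n" "q \<in> Ix n" "r \<in> Ix n"
  shows "(\<Sum>d\<in>Ix n. Rop n x p d * pd q (\<lambda>y. Rop n y d r) x) =
    (\<Sum>k\<in>toda_terms n. \<Sum>l\<in>toda_terms n. \<Sum>d\<in>Ix n.
       (toda_exp n k x * toda_coeff n k p d) * (toda_grad n l q * toda_exp n l x * toda_coeff n l d r))"
proof -
  have "(\<Sum>d\<in>Ix n. Rop n x p d * pd q (\<lambda>y. Rop n y d r) x) = (\<Sum>d\<in>Ix n.
      (\<Sum>k\<in>toda_terms n. toda_exp n k x * toda_coeff n k p d)
      * (\<Sum>l\<in>toda_terms n. toda_grad n l q * toda_exp n l x * toda_coeff n l d r))"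
    using assms by (intro sum.cong refl) (simp add: Rop_eq_toda_sum pd_toda_sum)
  then show ?thesis by (simp only: sum_mult_sum)
qed

lemma nijenhuis_Rop:
  assumes a: "a \<in> Ix n" and b: "b \<in> Ix n" and c: "c \<in> Ix n"
  shows "nijenhuis n (Rop n) x a b c = 0"
proof -
  let ?F = "\<lambda>k. toda_exp n k x"
  have "nijenhuis n (Rop n) x a b c
     = ((\<Sum>d\<in>Ix n. Rop n x d b * pd d (\<lambda>y. Rop n y a c) x) - (\<Sum>d\<in>Ix n. Rop n x d c * pd d (\<lambda>y. Rop n y a b) x))
     - ((\<Sum>d\<in>Ix n. Rop n x a d * pd b (\<lambda>y. Rop n y d c) x) - (\<Sum>d\<in>Ix n. Rop n x a d * pd c (\<lambda>y. Rop n y d b) x))"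
    unfolding nijenhuis_def by (simp add: sum_subtractf right_diff_distrib)
  also have "\<dots> = (\<Sum>k\<in>toda_terms n. \<Sum>l\<in>toda_terms n. ?F k * ?F l * torsion_term n k l a b c)"
    unfolding sum_Rop_mult_pd_Rop[OF a b c] sum_Rop_mult_pd_Rop[OF a c b]
      sum_Rop_mult_pd_Rop'[OF a b c] sum_Rop_mult_pd_Rop'[OF a c b] torsion_term_def
    apply (simp only: sum_subtractf[symmetric])
    apply (intro sum.cong refl)
    apply (simp only: sum_distrib_left sum_distrib_right right_diff_distrib left_diff_distrib)
    apply (simp only: sum_subtractf[symmetric])
    apply (intro sum.cong refl)
    apply (simp add: algebra_simps)
    done
  also have "\<dots> = (\<Sum>k\<in>toda_terms n. \<Sum>l\<in>toda_terms n. (0::real))"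
  proof (rule sum_sum_eq_symmetrised)
    fix k l assume "k \<in> toda_terms n" "l \<in> toda_terms n"
    then have "?F k * ?F l * (torsion_term n k l a b c + torsion_term n l k a b c) = 0"
      by (simp add: torsion_term_antisym)
    then show "?F k * ?F l * torsion_term n k l a b c + ?F l * ?F k * torsion_term n l k a b c = 0 + 0"
      by (simp add: algebra_simps)
  qed
  finally show ?thesis by simp
qed

lemma X0_toda_grad: "k \<in> toda_terms n \<Longrightarrow> (\<Sum>d\<in>Ix n. X0 n x d * toda_grad n k d) = 1"
proof -
  assume k: "k \<in> toda_terms n"
  have e: "(\<Sum>d\<in>Ix n. X0 n x d * toda_grad n k d) = dot n (toda_grad n k) (X0 n x)"
    unfolding dot_def by (simp add: mult.commute)
  show ?thesis using k unfolding e toda_terms_def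
    by (auto simp: toda_fun_simps dot_simps dot_unit_vec_left X0_def)
qed

lemma homogeneous_Rop: "a \<in> Ix n \<Longrightarrow> b \<in> Ix n \<Longrightarrow> vapp n (X0 n) (\<lambda>y. Rop n y a b) x = Rop n x a b"
proof -
  assume a: "a \<in> Ix n" and b: "b \<in> Ix n"
  have "vapp n (X0 n) (\<lambda>y. Rop n y a b) x = (\<Sum>d\<in>Ix n. X0 n x d * (\<Sum>k\<in>toda_terms n. toda_grad n k d * toda_exp n k x * toda_coeff n k a b))"
    unfolding vapp_def using a b by (simp add: pd_Rop)
  also have "\<dots> = (\<Sum>k\<in>toda_terms n. (\<Sum>d\<in>Ix n. X0 n x d * toda_grad n k d) * (toda_exp n k x * toda_coeff n k a b))"
    by (simp add: sum_distrib_left sum_distrib_right mult.assoc) (rule sum.swap)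
  also have "\<dots> = (\<Sum>k\<in>toda_terms n. toda_exp n k x * toda_coeff n k a b)"
    by (intro sum.cong refl) (metis X0_toda_grad mult_1)
  also have "\<dots> = Rop n x a b" using a b by (simp add: Rop_eq_toda_sum)
  finally show ?thesis .
qed

fun toda_sign :: "nat + nat \<Rightarrow> real" where
  "toda_sign (Inl m) = 1" | "toda_sign (Inr j) = -1"

lemma sum_J2inv_toda_coeff: assumes k: "k \<in> toda_terms n" and e: "e \<in> Ix n"
  shows "(\<Sum>a\<in>Ix n. J2inv n e a * toda_coeff n k a c) = toda_sign k * (toda_grad n k e * toda_beta n k c - toda_beta n k e * toda_grad n k c)"
proof -
  have "(\<Sum>a\<in>Ix n. J2inv n e a * toda_coeff n k a c) = - (\<Sum>a\<in>Ix n. J2 n e a * (toda_u n k a * toda_alpha n k c + toda_w n k a * toda_beta n k c))"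
    unfolding J2inv_def toda_coeff_def by (simp add: sum_negf[symmetric])
  also have "\<dots> = - (if e \<le> n then toda_u n k (e + n) * toda_alpha n k c + toda_w n k (e + n) * toda_beta n k c
                          else - (toda_u n k (e - n) * toda_alpha n k c + toda_w n k (e - n) * toda_beta n k c))"
    by (simp only: sum_J2_mult[OF e])
  also have "\<dots> = toda_sign k * (toda_grad n k e * toda_beta n k c - toda_beta n k e * toda_grad n k c)"
    using k e unfolding toda_terms_def by (auto simp: unit_vec_def q_from_def p_from_def algebra_simps)
  finally show ?thesis .
qed

lemma omegaR_Rop:
  assumes e: "e \<in> Ix n" and c: "c \<in> Ix n"
  shows "omegaR n (Rop n) x e c = (\<Sum>k\<in>toda_terms n. toda_exp n k x
     * (toda_sign k * (toda_grad n k e * toda_beta n k c - toda_beta n k e * toda_grad n k c)))"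
  (is "_ = ?rhs")
proof -
  have "omegaR n (Rop n) x e c
      = (\<Sum>a\<in>Ix n. J2inv n e a * (\<Sum>k\<in>toda_terms n. toda_exp n k x * toda_coeff n k a c))"
    unfolding omegaR_def using c by (intro sum.cong refl) (simp add: Rop_eq_toda_sum)
  also have "\<dots> = (\<Sum>k\<in>toda_terms n. toda_exp n k x * (\<Sum>a\<in>Ix n. J2inv n e a * toda_coeff n k a c))"
    by (simp add: sum_distrib_left algebra_simps) (rule sum.swap)
  also have "\<dots> = ?rhs"
    by (intro sum.cong refl) (simp only: sum_J2inv_toda_coeff[OF _ e])
  finally show ?thesis .
qed

lemma pd_omegaR_Rop:
  assumes e: "e \<in> Ix n" and c: "c \<in> Ix n"
  shows "pd d (\<lambda>y. omegaR n (Rop n) y e c) x = (\<Sum>k\<in>toda_terms n. toda_grad n k d * toda_exp n k x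
     * (toda_sign k * (toda_grad n k e * toda_beta n k c - toda_beta n k e * toda_grad n k c)))"
  (is "_ = ?rhs")
proof -
  have "pd d (\<lambda>y. omegaR n (Rop n) y e c) x
      = (\<Sum>a\<in>Ix n. J2inv n e a * (\<Sum>k\<in>toda_terms n. toda_grad n k d * toda_exp n k x * toda_coeff n k a c))"
    unfolding pd_omegaR[OF pdiff_tensor_Rop] using c by (intro sum.cong refl) (simp add: pd_Rop)
  also have "\<dots> = (\<Sum>k\<in>toda_terms n. toda_grad n k d * toda_exp n k x
      * (\<Sum>a\<in>Ix n. J2inv n e a * toda_coeff n k a c))"
    by (simp add: sum_distrib_left algebra_simps) (rule sum.swap)
  also have "\<dots> = ?rhs"
    by (intro sum.cong refl) (simp only: sum_J2inv_toda_coeff[OF _ e])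
  finally show ?thesis .
qed

lemma mtrace_Rop: "mtrace n (Rop n) x = 2 * h1 n x"
proof -
  have "mtrace n (Rop n) x = (\<Sum>a\<in>Ix n. \<Sum>k\<in>toda_terms n. toda_exp n k x * toda_coeff n k a a)"
    unfolding mtrace_def by (intro sum.cong refl) (simp add: Rop_eq_toda_sum)
  also have "\<dots> = (\<Sum>k\<in>toda_terms n. toda_exp n k x * (dot n (toda_alpha n k) (toda_u n k) + dot n (toda_beta n k) (toda_w n k)))"
    by (subst sum.swap) (simp add: toda_coeff_def dot_def sum_distrib_left sum.distrib algebra_simps)
  also have "\<dots> = (\<Sum>m\<in>{1..n}. exp (x (n + m)) * (-2)) + (\<Sum>j\<in>{1..<n}. exp (x (j + 1) - x j) * 2)"
    by (simp only: sum_toda_terms) (intro arg_cong2[where f="(+)"] sum.cong refl; simp del: toda_simps add: dot_toda_Inl_Inl dot_toda_Inr_Inr)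
  also have "\<dots> = 2 * h1 n x"
  proof -
    have "{1..n - 1} = {1..<n::nat}" by auto
    then show ?thesis unfolding h1_def by (simp add: sum_distrib_left sum_distrib_right sum_negf algebra_simps)
  qed
  finally show ?thesis .
qed


lemma omegaN_structure_Rop: "omegaN_structure n (Rop n)"
proof unfold_locales
  show "pdiff_tensor (Rop n)" by (rule pdiff_tensor_Rop)
  show "nijenhuis n (Rop n) x a b c = 0" if "a \<in> Ix n" "b \<in> Ix n" "c \<in> Ix n" for x a b c
    using that by (rule nijenhuis_Rop)
  show "vapp n (X0 n) (\<lambda>y. Rop n y a b) x = Rop n x a b" if "a \<in> Ix n" "b \<in> Ix n" for x a b
    using that by (rule homogeneous_Rop)
  show "omegaR n (Rop n) x a c = - omegaR n (Rop n) x c a" if "a \<in> Ix n" "c \<in> Ix n" for x a c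
    using that by (simp add: omegaR_Rop sum_negf[symmetric] algebra_simps)
  show "pd d (\<lambda>y. omegaR n (Rop n) y e c) x + pd e (\<lambda>y. omegaR n (Rop n) y c d) x
      + pd c (\<lambda>y. omegaR n (Rop n) y d e) x = 0"
    if "d \<in> Ix n" "e \<in> Ix n" "c \<in> Ix n" for x d e c
    using that by (simp add: pd_omegaR_Rop sum.distrib[symmetric] algebra_simps)
qed

theorem mainTheorem2:
  fixes n :: nat
  assumes "n \<ge> 1"
  shows "(\<exists>h :: nat \<Rightarrow> pt \<Rightarrow> real.
            h 1 = h1 n \<and>
            (\<forall>j \<ge> 1. (\<forall>x c. (\<lambda>t. h j (x(c := t))) differentiable (at (x c))) \<and>
                      (\<forall>x. \<forall>a \<in> {1..2 * n}. chi n j x a = ham_vf n (\<lambda>x. J2 n) (h j) x a)) \<and>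
            (\<forall>i j x. j \<ge> 1 \<longrightarrow> vapp n (Xf n i) (h j) x = real (i + j) * h (i + j) x))
       \<and> (\<forall>i j x. j \<ge> 2 \<longrightarrow> (\<forall>a \<in> {1..2 * n}. \<forall>b \<in> {1..2 * n}.
            lie_deriv n (Xf n i) (Jt n j) x a b = (real j - real i - 2) * Jt n (i + j) x a b))
       \<and> (\<forall>i j x. \<forall>a \<in> {1..2 * n}.
            lie_bracket n (Xf n i) (Xf n j) x a = (real j - real i) * Xf n (i + j) x a)"
proof -
  interpret toda: omegaN_structure n "Rop n" by (rule omegaN_structure_Rop)
  have Xf: "Xf n = toda.msym" by (simp add: fun_eq_iff Xf_def toda.msym_def)
  have ham_1: "toda.ham 1 = h1 n" by (simp add: fun_eq_iff toda.ham_def mtrace_mmul_mid mtrace_Rop)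
  have chi: "chi n j x a = ham_vf n (\<lambda>x. J2 n) (toda.ham j) x a" if "1 \<le> j" "a \<in> Ix n" for j x a
    unfolding chi_def ham_1[symmetric] using toda.funpow_mvec_ham_vf[OF that(2), of "j - 1" x] that(1)
    by simp
  have "\<forall>j \<ge> 1. \<forall>x c. (\<lambda>t. toda.ham j (x(c := t))) differentiable (at (x c))"
    using toda.pdiff_ham by (simp add: pdiff_def)
  then show ?thesis
    unfolding Xf Jt_def
    using ham_1 chi toda.vapp_msym_ham toda.lie_deriv_msym_J toda.lie_bracket_msym by blast
qed


end
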